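(* Let $a=\{a_1,\dots,a_m\}$ be a set of positive integers and $n\ge 0$. There exist a function $P_{n,a}:\mathbb{Z}_{\ge0}\to\mathbb{Q}$ (in fact a polynomial) and an integer $N$ such that for every $s\ge 1$ and all integers $k_1,\dots,k_s\ge N$, the number of $n$-element independent sets of the disjoint union $F(a,k_1)+F(a,k_2)+\cdots+F(a,k_s)$ equals $P_{n,a}(k_1+\cdots+k_s)$. In other words, this number depends only on $a$, $n$ and $\sum_ik_i$.
   Context: For a set $a=\{a_1,\dots,a_m\}$ of positive integers and a positive integer $k$, $F(a,k)$ is the simple graph with vertex set $\mathbb{Z}/k\mathbb{Z}$ in which distinct vertices $i,j$ are adjacent if and only if $i-j\equiv a_r\pmod k$ or $j-i\equiv a_r\pmod k$ for some $1\le r\le m$. $G_1+\cdots+G_s$ denotes the disjoint union of graphs. An independent set is a set of vertices no two of which are adjacent. *)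

theory Defs
  imports "HOL-Computational_Algebra.Polynomial"
begin

text \<open>The circulant graph F(a,k): vertex set Z/kZ, represented by {0..<k}.
  Distinct vertices i, j are adjacent iff i - j = r or j - i = r (mod k) for some r in a.\<close>
definition circ_adj :: "nat set \<Rightarrow> nat \<Rightarrow> nat \<Rightarrow> nat \<Rightarrow> bool" where
  "circ_adj a k i j \<longleftrightarrow> i \<noteq> j \<and>
     (\<exists>r\<in>a. (int i - int j) mod int k = int r mod int k \<or>
             (int j - int i) mod int k = int r mod int k)"

text \<open>Disjoint union F(a,k 0) + ... + F(a,k (s-1)): vertices are pairs (t,i) with t < s, i < k t.\<close>
definition union_verts :: "nat \<Rightarrow> (nat \<Rightarrow> nat) \<Rightarrow> (nat \<times> nat) set" where
  "union_verts s k = {(t, i). t < s \<and> i < k t}"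

definition union_adj :: "nat set \<Rightarrow> (nat \<Rightarrow> nat) \<Rightarrow> nat \<times> nat \<Rightarrow> nat \<times> nat \<Rightarrow> bool" where
  "union_adj a k v w \<longleftrightarrow> fst v = fst w \<and> circ_adj a (k (fst v)) (snd v) (snd w)"

definition union_indep :: "nat set \<Rightarrow> nat \<Rightarrow> (nat \<Rightarrow> nat) \<Rightarrow> (nat \<times> nat) set \<Rightarrow> bool" where
  "union_indep a s k S \<longleftrightarrow> S \<subseteq> union_verts s k \<and>
     (\<forall>v\<in>S. \<forall>w\<in>S. \<not> union_adj a k v w)"

definition num_indep :: "nat set \<Rightarrow> nat \<Rightarrow> nat \<Rightarrow> (nat \<Rightarrow> nat) \<Rightarrow> nat" where
  "num_indep a n s k = card {S. union_indep a s k S \<and> card S = n}"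

end

theory Submission
  imports Defs "HOL-Computational_Algebra.Formal_Power_Series"
begin

text \<open>An independent set of F(a,k) is a set S of residues mod k whose periodic extension
  contains no two integers differing by an element of a. Only differences up to M = max a occur,
  so points of S further than M apart do not interact, and an m-element configuration decomposes
  into blocks, each a translate of a cluster of diameter at most 2mM, separated by gaps longer
  than M. Let P L and C k be the generating functions of admissible sets on the path {0..<L} and on
  the k-cycle. Splitting off the last block gives a linear recursion for P; comparing the two
  expansions of P (L+1) * P L' and P L * P (L'+1) shows that modulo x^(n+1) the coefficients of
  P L1 * P L2 depend only on L1 + L2 for large arguments, hence P (L+1) = P L * E for a fixed series
  E with integral coefficients and constant term 1. Classifying cyclic configurations by the block
  at position 0 expresses C k through P, so C (k+1) = C k * E and C k = Z * E^k for large k. By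
  rotation k divides m times the number of m-subsets of the k-cycle, which forces Z = 1 modulo
  x^(n+1). The generating function of the disjoint union is the product of the C (k_i), hence
  congruent to E^K with K the sum of the k_i, and the n-th coefficient of
  E^K = \<Sum>i. (K choose i) (E - 1)^i is a polynomial in K because (E - 1)^i vanishes below
  degree i.\<close>

unbundle fps_syntax

section \<open>Configurations avoiding the differences\<close>

definition diff_free :: "nat set \<Rightarrow> int set \<Rightarrow> bool" where
  "diff_free a T \<longleftrightarrow> (\<forall>u\<in>T. \<forall>r\<in>a. u + int r \<notin> T)"

lemma diff_free_subset: "diff_free a T \<Longrightarrow> U \<subseteq> T \<Longrightarrow> diff_free a U"
  unfolding diff_free_def by blast

lemma diff_free_image_add_left: "diff_free a ((\<lambda>c. y + c) ` C) \<longleftrightarrow> diff_free a C"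
  unfolding diff_free_def by (auto simp: add.assoc)

lemma diff_free_image_add_right: "diff_free a ((\<lambda>z. z + d0) ` T) \<longleftrightarrow> diff_free a T"
  using diff_free_image_add_left[of a d0 T] by (simp add: add.commute)

lemma diff_free_Un_separated:
  assumes "diff_free a A" "diff_free a B" "\<forall>u\<in>A. \<forall>v\<in>B. u + M < v" "\<forall>r\<in>a. int r \<le> M"
  shows "diff_free a (A \<union> B)"
  unfolding diff_free_def
proof (intro ballI)
  fix u r assume u: "u \<in> A \<union> B" and r: "r \<in> a"
  show "u + int r \<notin> A \<union> B"
  proof
    assume ur: "u + int r \<in> A \<union> B"
    show False
    proof (cases "u \<in> A")
      case True
      show False
      proof (cases "u + int r \<in> A")
        case True thus False using assms(1) r \<open>u \<in> A\<close> unfolding diff_free_def by blast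
      next
        case False hence "u + int r \<in> B" using ur by auto
        thus False using assms(3,4) r True by fastforce
      qed
    next
      case False hence uB: "u \<in> B" using u by auto
      show False
      proof (cases "u + int r \<in> B")
        case True thus False using assms(2) r uB unfolding diff_free_def by blast
      next
        case False hence "u + int r \<in> A" using ur by auto
        thus False using assms(3,4) r uB by fastforce
      qed
    qed
  qed
qed

section \<open>Clusters, blocks and gaps\<close>

text \<open>A cluster is a finite set starting at 0 whose consecutive elements are at most M apart;
  T has a block with cluster C at y if near y it coincides with y + C and is empty within
  distance M on both sides.\<close>
definition cluster :: "int \<Rightarrow> int set \<Rightarrow> bool" where
  "cluster M C \<longleftrightarrow> finite C \<and> 0 \<in> C \<and> (\<forall>c\<in>C. 0 \<le> c) \<and>
     (\<forall>w. 0 \<le> w \<and> w < Max C \<longrightarrow> (\<exists>c\<in>C. w < c \<and> c \<le> w + M))"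

definition block :: "int \<Rightarrow> int set \<Rightarrow> int \<Rightarrow> int set \<Rightarrow> bool" where
  "block M T y C \<longleftrightarrow> T \<inter> {y - M .. y + Max C + M} = (\<lambda>c. y + c) ` C"

definition gap :: "int \<Rightarrow> int set \<Rightarrow> int \<Rightarrow> bool" where
  "gap M T x \<longleftrightarrow> T \<inter> {x - M .. x} = {}"

lemma cluster_Max_ge: "cluster M C \<Longrightarrow> c \<in> C \<Longrightarrow> c \<le> Max C"
  unfolding cluster_def by auto

lemma cluster_nonneg: "cluster M C \<Longrightarrow> c \<in> C \<Longrightarrow> 0 \<le> c"
  unfolding cluster_def by auto

lemma cluster_Max_in: "cluster M C \<Longrightarrow> Max C \<in> C"
  unfolding cluster_def by (intro Max_in) auto

lemma block_mem: "block M T y C \<Longrightarrow> cluster M C \<Longrightarrow> c \<in> C \<Longrightarrow> y + c \<in> T"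
  unfolding block_def by blast

lemma block_no_left_neighbour:
  assumes r: "block M T y C" and c: "cluster M C" and u: "y - M \<le> u" "u < y"
  shows "u \<notin> T"
proof
  assume "u \<in> T"
  have "0 \<le> Max C" using c cluster_Max_ge[OF c] unfolding cluster_def by auto
  hence "u \<in> T \<inter> {y - M .. y + Max C + M}" using u \<open>u \<in> T\<close> by auto
  hence "u \<in> (\<lambda>c. y + c) ` C" using r unfolding block_def by simp
  then obtain c' where "c' \<in> C" "u = y + c'" by auto
  thus False using cluster_nonneg[OF c] u by force
qed

lemma block_window: "block M T y C \<Longrightarrow> u \<in> T \<Longrightarrow> y - M \<le> u \<Longrightarrow> u \<le> y + Max C + M \<Longrightarrow> u - y \<in> C"
  unfolding block_def by (metis (no_types, lifting) IntI add_diff_cancel_left' atLeastAtMost_iff imageE)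

lemma block_not_gap:
  assumes c: "cluster M C" and r: "block M T y C" and f: "gap M T x"
    and cov: "y \<le> x" "x \<le> y + Max C + M"
  shows False
proof (cases "x - y \<le> M")
  case True
  have "y \<in> T" using block_mem[OF r c] c unfolding cluster_def by force
  thus False using f True cov unfolding gap_def by auto
next
  case False
  define w where "w = x - y - M - 1"
  have "0 \<le> w" "w < Max C" using False cov by (auto simp: w_def)
  then obtain c' where c': "c' \<in> C" "w < c'" "c' \<le> w + M" using c unfolding cluster_def by blast
  have "y + c' \<in> T" using block_mem[OF r c c'(1)] .
  moreover have "y + c' \<in> {x - M .. x}" using c' by (auto simp: w_def)
  ultimately show False using f unfolding gap_def by auto
qed

lemma block_start_le:
  assumes M: "0 \<le> M" and c: "cluster M C" and c': "cluster M C'" and r: "block M T y C" and r': "block M T y' C'"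
    and cov: "y \<le> x" "x \<le> y + Max C + M" "y' \<le> x"
  shows "y' \<le> y"
proof (rule ccontr)
  assume "\<not> y' \<le> y"
  hence lt: "y < y'" by simp
  have y'T: "y' \<in> T" using block_mem[OF r' c'] c' unfolding cluster_def by force
  have yT: "y \<in> T" using block_mem[OF r c] c unfolding cluster_def by force
  have cC: "y' - y \<in> C" using block_window[OF r y'T] lt cov M by auto
  show False
  proof (cases "y' - y \<le> M")
    case True
    thus False using block_no_left_neighbour[OF r' c'] yT lt by auto
  next
    case False
    define w where "w = y' - y - M - 1"
    have "0 \<le> w" "w < Max C" using False cluster_Max_ge[OF c cC] M by (auto simp: w_def)
    then obtain d where d: "d \<in> C" "w < d" "d \<le> w + M" using c unfolding cluster_def by blast
    have yd: "y + d \<in> T" using block_mem[OF r c d(1)] .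
    show False using block_no_left_neighbour[OF r' c'] yd d by (auto simp: w_def)
  qed
qed

lemma block_unique:
  assumes M: "0 \<le> M" and c: "cluster M C" and c': "cluster M C'" and r: "block M T y C" and r': "block M T y' C'"
    and cov: "y \<le> x" "x \<le> y + Max C + M" "y' \<le> x" "x \<le> y' + Max C' + M"
  shows "y = y' \<and> C = C'"
proof -
  have yy: "y = y'"
    using block_start_le[OF M c c' r r' cov(1,2,3)] block_start_le[OF M c' c r' r cov(3,4,1)] by simp
  have same_cluster: "C = C'" if c: "cluster M C" and c': "cluster M C'" and r: "block M T y C" and r': "block M T y C'"
      and le: "Max C \<le> Max C'" for C C'
  proof -
    have eqM: "Max C = Max C'"
    proof (rule ccontr)
      assume "Max C \<noteq> Max C'"
      hence lt: "Max C < Max C'" using le by auto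
      have "0 \<le> Max C" using cluster_Max_ge[OF c] c unfolding cluster_def by auto
      then obtain d where d: "d \<in> C'" "Max C < d" "d \<le> Max C + M" using c' lt unfolding cluster_def by blast
      have "y + d \<in> T" using block_mem[OF r' c' d(1)] .
      have "0 \<le> d" using cluster_nonneg[OF c' d(1)] .
      hence "(y + d) - y \<in> C" using block_window[OF r \<open>y + d \<in> T\<close>] d M by auto
      hence "d \<in> C" by simp
      thus False using cluster_Max_ge[OF c \<open>d \<in> C\<close>] d(2) by simp
    qed
    have "(\<lambda>c. y + c) ` C = (\<lambda>c. y + c) ` C'" using r r' eqM unfolding block_def by simp
    moreover have "inj (\<lambda>c::int. y + c)" by (simp add: inj_def)
    ultimately show ?thesis by (simp add: inj_image_eq_iff)
  qed
  show ?thesis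
  proof (cases "Max C \<le> Max C'")
    case True thus ?thesis using same_cluster[OF c c' r] r' yy by auto
  next
    case False thus ?thesis using same_cluster[OF c' c] r' r yy by auto
  qed
qed


definition chained :: "int \<Rightarrow> int set \<Rightarrow> int \<Rightarrow> int \<Rightarrow> bool" where
  "chained M T v b \<longleftrightarrow> (\<forall>w. v \<le> w \<and> w < b \<longrightarrow> (\<exists>c\<in>T. w < c \<and> c \<le> w + M))"

lemma chained_trans: "chained M T v b \<Longrightarrow> chained M T b e \<Longrightarrow> chained M T v e"
  unfolding chained_def by (meson not_le)

lemma chained_extend_left:
  "chained M T v b \<Longrightarrow> v \<in> T \<Longrightarrow> v - M \<le> u \<Longrightarrow> chained M T u b"
  unfolding chained_def by (metis add.commute diff_le_eq order_trans linorder_not_le)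

lemma chained_extend_right:
  "chained M T v b \<Longrightarrow> c \<in> T \<Longrightarrow> b < c \<Longrightarrow> c \<le> b + M \<Longrightarrow> chained M T v c"
  unfolding chained_def by (metis add_le_cancel_right order_trans linorder_not_le)

lemma card_chain_ge:
  assumes M: "1 \<le> M" and v: "v \<in> T" and ch: "chained M T v b"
    and fin: "finite (T \<inter> {v .. v + int j * M})" and jb: "int j * M \<le> b - v"
  shows "j + 1 \<le> card (T \<inter> {v .. v + int j * M})"
  using fin jb
proof (induction j)
  case 0
  have "T \<inter> {v .. v + int 0 * M} = {v}" using v by auto
  thus ?case by simp
next
  case (Suc j)
  have sub: "T \<inter> {v .. v + int j * M} \<subseteq> T \<inter> {v .. v + int (Suc j) * M}"
    using M by (auto simp: algebra_simps)
  have fin': "finite (T \<inter> {v .. v + int j * M})" using finite_subset[OF sub Suc.prems(1)] .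
  have "int j * M \<le> b - v" using Suc.prems(2) M by (auto simp: algebra_simps)
  hence IH: "j + 1 \<le> card (T \<inter> {v .. v + int j * M})" using Suc.IH fin' by blast
  have "v + int j * M < b" using Suc.prems(2) M by (auto simp: algebra_simps)
  moreover have "v \<le> v + int j * M" using M by simp
  ultimately obtain c where c: "c \<in> T" "v + int j * M < c" "c \<le> v + int j * M + M"
    using ch unfolding chained_def by blast
  have "insert c (T \<inter> {v .. v + int j * M}) \<subseteq> T \<inter> {v .. v + int (Suc j) * M}"
    using sub c M by (auto simp: algebra_simps intro: order_trans[of _ "v + int j * M"])
  hence "card (insert c (T \<inter> {v .. v + int j * M})) \<le> card (T \<inter> {v .. v + int (Suc j) * M})"
    using Suc.prems(1) by (rule card_mono[rotated])
  moreover have "c \<notin> T \<inter> {v .. v + int j * M}" using c by auto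
  ultimately show ?case using IH fin' by simp
qed

lemma chained_length_lt:
  assumes M: "1 \<le> M" and v: "v \<in> T" and ch: "chained M T v b"
    and fin: "finite (T \<inter> {v .. v + int q * M})" and card: "card (T \<inter> {v .. v + int q * M}) \<le> q"
  shows "b - v < int q * M"
  using card_chain_ge[OF M v ch fin] card by fastforce

lemma block_of_chain:
  assumes M: "1 \<le> M" and y: "y \<in> T" and e: "e \<in> T" "y \<le> e" and ch: "chained M T y e"
    and left: "\<forall>u\<in>T. \<not> (y - M \<le> u \<and> u < y)"
    and right: "\<forall>c\<in>T. \<not> (e < c \<and> c \<le> e + M)"
    and fin: "finite (T \<inter> {y .. e})"
  defines "C \<equiv> (\<lambda>u. u - y) ` (T \<inter> {y .. e})"
  shows "cluster M C" "block M T y C" "Max C = e - y"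
proof -
  have finC: "finite C" using fin unfolding C_def by simp
  show MaxC: "Max C = e - y"
  proof (rule Max_eqI[OF finC])
    show "c \<le> e - y" if "c \<in> C" for c using that unfolding C_def by auto
    show "e - y \<in> C" unfolding C_def using e by auto
  qed
  show "cluster M C"
    unfolding cluster_def
  proof (intro conjI allI impI ballI)
    show "finite C" by (rule finC)
    show "0 \<in> C" unfolding C_def using y e by force
    show "0 \<le> c" if "c \<in> C" for c using that unfolding C_def by auto
    fix w assume w: "0 \<le> w \<and> w < Max C"
    hence "y \<le> y + w \<and> y + w < e" using MaxC by auto
    then obtain c where c: "c \<in> T" "y + w < c" "c \<le> y + w + M"
      using ch unfolding chained_def by blast
    have "c \<le> e" using right c w MaxC by force
    hence "c - y \<in> C" unfolding C_def using c w by auto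
    thus "\<exists>c\<in>C. w < c \<and> c \<le> w + M" using c by (intro bexI[of _ "c - y"]) auto
  qed
  have img: "(\<lambda>c. y + c) ` C = T \<inter> {y .. e}" unfolding C_def by (auto simp: image_image)
  show "block M T y C"
    unfolding block_def img MaxC
  proof (intro equalityI subsetI)
    fix u assume u: "u \<in> T \<inter> {y - M .. y + (e - y) + M}"
    have "\<not> u < y" using left u by force
    moreover have "\<not> e < u" using right u by force
    ultimately show "u \<in> T \<inter> {y .. e}" using u by auto
  qed (use M in auto)
qed

text \<open>The block is found by extending the M-chain through an element of T just left of x as far
  as possible in both directions; the chain is short because the window around x contains at
  most q elements of T.\<close>
lemma block_exists:
  assumes M: "1 \<le> M" and W: "W = int (q + 2) * M"
    and fin: "finite (T \<inter> {x - W .. x + W})" and cq: "card (T \<inter> {x - W .. x + W}) \<le> q"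
    and nf: "\<not> gap M T x"
  shows "\<exists>y C. cluster M C \<and> block M T y C \<and> y \<le> x \<and> x \<le> y + Max C + M \<and>
           C \<subseteq> {0 .. 2 * int q * M} \<and> (\<lambda>c. y + c) ` C \<subseteq> T \<inter> {x - W .. x + W}"
proof -
  define win where "win = T \<inter> {x - W .. x + W}"
  obtain z where z: "z \<in> T" "x - M \<le> z" "z \<le> x" using nf unfolding gap_def by auto
  have qM: "0 \<le> int q * M" using M by simp
  have Wge: "int q * M + 2 * M \<le> W" using W by (simp add: algebra_simps)
  have fw: "finite win" using fin unfolding win_def .
  have short: "b - v < int q * M"
    if "v \<in> T" "chained M T v b" "{v .. v + int q * M} \<subseteq> {x - W .. x + W}" for v b
  proof (rule chained_length_lt[OF M that(1,2)])
    show "finite (T \<inter> {v .. v + int q * M})" using finite_subset[OF _ fin] that(3) by blast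
    have "card (T \<inter> {v .. v + int q * M}) \<le> card (T \<inter> {x - W .. x + W})"
      using that(3) fin by (intro card_mono) auto
    thus "card (T \<inter> {v .. v + int q * M}) \<le> q" using cq by simp
  qed
  define L where "L = {v \<in> win. v \<le> z \<and> chained M T v z}"
  define R where "R = {v \<in> win. z \<le> v \<and> chained M T z v}"
  have "x - W \<le> z" "z \<le> x + W" using z Wge qM M by linarith+
  hence "z \<in> win" using z unfolding win_def by auto
  hence "z \<in> L" "z \<in> R" unfolding L_def R_def chained_def by auto
  hence finL: "finite L" "L \<noteq> {}" and finR: "finite R" "R \<noteq> {}"
    using fw unfolding L_def R_def by auto
  define y where "y = Min L"
  define e where "e = Max R"
  have "y \<in> L" "e \<in> R" using Min_in[OF finL] Max_in[OF finR] y_def e_def by auto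
  hence y: "y \<in> T" "y \<le> z" "x - W \<le> y" "chained M T y z"
    and e: "e \<in> T" "z \<le> e" "e \<le> x + W" "chained M T z e"
    unfolding L_def R_def win_def by auto
  have zy: "z - y < int q * M" using short[OF y(1,4)] y z Wge qM M by auto
  have ez: "e - z < int q * M" using short[OF z(1) e(4)] z Wge qM M by auto
  have left: "\<forall>u\<in>T. \<not> (y - M \<le> u \<and> u < y)"
  proof (intro ballI notI)
    fix u assume u: "u \<in> T" "y - M \<le> u \<and> u < y"
    have "u \<in> L" using u zy z Wge y chained_extend_left[OF y(4,1)] unfolding L_def win_def by auto
    thus False using Min_le[OF finL(1)] u unfolding y_def by fastforce
  qed
  have right: "\<forall>c\<in>T. \<not> (e < c \<and> c \<le> e + M)"
  proof (intro ballI notI)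
    fix c assume c: "c \<in> T" "e < c \<and> c \<le> e + M"
    have "c \<in> R" using c ez z Wge e chained_extend_right[OF e(4) c(1)] unfolding R_def win_def by auto
    thus False using Max_ge[OF finR(1)] c unfolding e_def by fastforce
  qed
  define C where "C = (\<lambda>u. u - y) ` (T \<inter> {y .. e})"
  have finTye: "finite (T \<inter> {y .. e})" using finite_subset[OF _ fin] y e by auto
  note blk = block_of_chain[OF M y(1) e(1) _ chained_trans[OF y(4) e(4)] left right finTye]
  show ?thesis
  proof (intro exI conjI)
    show "cluster M C" "block M T y C" using blk y e unfolding C_def by auto
    show "y \<le> x" "x \<le> y + Max C + M" using blk y e z unfolding C_def by auto
    show "C \<subseteq> {0 .. 2 * int q * M}" unfolding C_def using zy ez by auto
    show "(\<lambda>c. y + c) ` C \<subseteq> T \<inter> {x - W .. x + W}" unfolding C_def using y e by auto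
  qed
qed

lemma block_image_add_right: "block M ((\<lambda>z. z + d0) ` T) (y + d0) C \<longleftrightarrow> block M T y C"
proof -
  have inj: "inj (\<lambda>z::int. z + d0)" by (simp add: inj_def)
  have i1: "(\<lambda>z. z + d0) ` T \<inter> {y + d0 - M..y + d0 + Max C + M} = (\<lambda>z. z + d0) ` (T \<inter> {y - M .. y + Max C + M})"
  proof (intro equalityI subsetI)
    fix u assume "u \<in> (\<lambda>z. z + d0) ` T \<inter> {y + d0 - M..y + d0 + Max C + M}"
    then obtain t where "t \<in> T" "u = t + d0" "y + d0 - M \<le> u" "u \<le> y + d0 + Max C + M" by auto
    thus "u \<in> (\<lambda>z. z + d0) ` (T \<inter> {y - M .. y + Max C + M})" by auto
  next
    fix u assume "u \<in> (\<lambda>z. z + d0) ` (T \<inter> {y - M .. y + Max C + M})"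
    then obtain t where "t \<in> T" "u = t + d0" "y - M \<le> t" "t \<le> y + Max C + M" by auto
    thus "u \<in> (\<lambda>z. z + d0) ` T \<inter> {y + d0 - M..y + d0 + Max C + M}" by auto
  qed
  have i2: "(\<lambda>c. y + d0 + c) ` C = (\<lambda>z. z + d0) ` (\<lambda>c. y + c) ` C" by (auto simp: image_image algebra_simps)
  show ?thesis unfolding block_def i1 i2 by (simp add: inj_image_eq_iff[OF inj])
qed

section \<open>Configurations on a path and on a cycle\<close>

definition line_sets :: "nat set \<Rightarrow> nat \<Rightarrow> nat \<Rightarrow> int set set" where
  "line_sets a L m = {S. S \<subseteq> {0..<int L} \<and> diff_free a S \<and> card S = m}"

definition line_count :: "nat set \<Rightarrow> nat \<Rightarrow> nat \<Rightarrow> nat" where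
  "line_count a L m = card (line_sets a L m)"

lemma finite_line_sets: "finite (line_sets a L m)"
proof -
  have "line_sets a L m \<subseteq> Pow {0..<int L}" unfolding line_sets_def by auto
  thus ?thesis by (rule finite_subset) auto
qed

definition clusters :: "nat set \<Rightarrow> int \<Rightarrow> int \<Rightarrow> int set set" where
  "clusters a M B = {C. cluster M C \<and> diff_free a C \<and> C \<subseteq> {0..B}}"

lemma finite_clusters: "finite (clusters a M B)"
proof -
  have "clusters a M B \<subseteq> Pow {0..B}" unfolding clusters_def by auto
  thus ?thesis by (rule finite_subset) auto
qed

lemma card_image_add_left: "card ((\<lambda>c::int. y + c) ` C) = card C"
  by (rule card_image) (simp add: inj_on_def)

lemma atLeastLessThan_int_nat[simp]: "{0..<int (nat z)} = {0..<z}"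
  by (cases "z \<le> 0") auto

lemma line_sets_Suc:
  "line_sets a (Suc L) m = line_sets a L m \<union> {S \<in> line_sets a (Suc L) m. int L \<in> S}"
proof -
  have "S \<subseteq> {0..<int L}" if "S \<subseteq> {0..<int (Suc L)}" "int L \<notin> S" for S
  proof
    fix x assume "x \<in> S"
    hence "0 \<le> x" "x < int L + 1" "x \<noteq> int L" using that by auto
    thus "x \<in> {0..<int L}" by auto
  qed
  thus ?thesis unfolding line_sets_def by auto
qed

lemma line_count_Suc_split:
  "line_count a (Suc L) m = line_count a L m + card {S \<in> line_sets a (Suc L) m. int L \<in> S}"
proof -
  have d: "line_sets a L m \<inter> {S \<in> line_sets a (Suc L) m. int L \<in> S} = {}" unfolding line_sets_def by auto
  show ?thesis unfolding line_count_def
    by (subst line_sets_Suc, rule card_Un_disjoint)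
       (use d finite_line_sets[of a "Suc L" m] finite_line_sets[of a L m] in auto)
qed

lemma line_count_0: "line_count a L 0 = 1"
proof -
  have "line_sets a L 0 = {{}}"
  proof (intro equalityI subsetI)
    fix S assume "S \<in> line_sets a L 0"
    hence "S \<subseteq> {0..<int L}" "card S = 0" unfolding line_sets_def by auto
    thus "S \<in> {{}}" using finite_subset by fastforce
  qed (auto simp: line_sets_def diff_free_def)
  thus ?thesis unfolding line_count_def by simp
qed

definition periodic :: "nat \<Rightarrow> int set \<Rightarrow> int set" where
  "periodic k S = {z. z mod int k \<in> S}"

definition cycle_sets :: "nat set \<Rightarrow> nat \<Rightarrow> nat \<Rightarrow> int set set" where
  "cycle_sets a k m = {S. S \<subseteq> {0..<int k} \<and> diff_free a (periodic k S) \<and> card S = m}"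

definition cycle_count :: "nat set \<Rightarrow> nat \<Rightarrow> nat \<Rightarrow> nat" where
  "cycle_count a k m = card (cycle_sets a k m)"

definition rotate_mod :: "nat \<Rightarrow> int \<Rightarrow> int set \<Rightarrow> int set" where
  "rotate_mod k d0 S = (\<lambda>x. (x + d0) mod int k) ` S"

lemma finite_cycle_sets: "finite (cycle_sets a k m)"
proof -
  have "cycle_sets a k m \<subseteq> Pow {0..<int k}" unfolding cycle_sets_def by auto
  thus ?thesis by (rule finite_subset) auto
qed

lemma periodic_iff_small: "S \<subseteq> {0..<int k} \<Longrightarrow> z \<in> {0..<int k} \<Longrightarrow> z \<in> periodic k S \<longleftrightarrow> z \<in> S"
  unfolding periodic_def by auto

lemma rotate_mod_subset: "0 < k \<Longrightarrow> rotate_mod k d0 S \<subseteq> {0..<int k}"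
  unfolding rotate_mod_def by auto

lemma periodic_rotate_mod:
  assumes k: "0 < k" and S: "S \<subseteq> {0..<int k}"
  shows "periodic k (rotate_mod k d0 S) = (\<lambda>z. z + d0) ` periodic k S"
proof (intro equalityI subsetI)
  fix z assume "z \<in> periodic k (rotate_mod k d0 S)"
  then obtain x where x: "x \<in> S" "z mod int k = (x + d0) mod int k" unfolding periodic_def rotate_mod_def by auto
  have "(z - d0) mod int k = (x + d0 - d0) mod int k" using mod_diff_cong[OF x(2), of d0 d0] by simp
  hence "(z - d0) mod int k = x mod int k" by simp
  also have "\<dots> = x" using x(1) S by auto
  finally have "z - d0 \<in> periodic k S" using x(1) unfolding periodic_def by simp
  thus "z \<in> (\<lambda>z. z + d0) ` periodic k S" by (intro image_eqI[of _ _ "z - d0"]) auto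
next
  fix z assume "z \<in> (\<lambda>z. z + d0) ` periodic k S"
  then obtain w where w: "w \<in> periodic k S" "z = w + d0" by auto
  have "z mod int k = (w mod int k + d0) mod int k" using w(2) by (simp add: mod_add_left_eq)
  thus "z \<in> periodic k (rotate_mod k d0 S)" using w(1) unfolding periodic_def rotate_mod_def by auto
qed

lemma inj_on_rotate_mod: "0 < k \<Longrightarrow> inj_on (\<lambda>x. (x + d0) mod int k) {0..<int k}"
proof (rule inj_onI)
  fix x y assume k: "0 < k" and xy: "x \<in> {0..<int k}" "y \<in> {0..<int k}" "(x + d0) mod int k = (y + d0) mod int k"
  have "(x + d0 - d0) mod int k = (y + d0 - d0) mod int k" using mod_diff_cong[OF xy(3), of d0 d0] by simp
  hence "x mod int k = y mod int k" by simp
  thus "x = y" using xy by simp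
qed

lemma card_rotate_mod: "0 < k \<Longrightarrow> S \<subseteq> {0..<int k} \<Longrightarrow> card (rotate_mod k d0 S) = card S"
  unfolding rotate_mod_def by (rule card_image) (use inj_on_rotate_mod inj_on_subset in blast)

lemma rotate_mod_inverse: "0 < k \<Longrightarrow> S \<subseteq> {0..<int k} \<Longrightarrow> rotate_mod k (- d0) (rotate_mod k d0 S) = S"
proof -
  assume k: "0 < k" and S: "S \<subseteq> {0..<int k}"
  have "rotate_mod k (- d0) (rotate_mod k d0 S) = (\<lambda>x. ((x + d0) mod int k + - d0) mod int k) ` S"
    unfolding rotate_mod_def image_image by simp
  also have "\<dots> = (\<lambda>x. x) ` S"
  proof (rule image_cong[OF refl])
    fix x assume "x \<in> S"
    have "((x + d0) mod int k + - d0) mod int k = (x + d0 + - d0) mod int k" by (rule mod_add_left_eq)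
    also have "\<dots> = x" using \<open>x \<in> S\<close> S by auto
    finally show "((x + d0) mod int k + - d0) mod int k = x" .
  qed
  finally show ?thesis by simp
qed

lemma card_cycle_pred_translate:
  assumes k: "0 < k"
  shows "card {S. S \<subseteq> {0..<int k} \<and> card S = m \<and> Q (periodic k S)} =
         card {S. S \<subseteq> {0..<int k} \<and> card S = m \<and> Q ((\<lambda>z. z + d0) ` periodic k S)}"
proof -
  have "bij_betw (rotate_mod k d0) {S. S \<subseteq> {0..<int k} \<and> card S = m \<and> Q ((\<lambda>z. z + d0) ` periodic k S)}
          {S. S \<subseteq> {0..<int k} \<and> card S = m \<and> Q (periodic k S)}"
  proof (rule bij_betw_byWitness[where f' = "rotate_mod k (- d0)"])
    show "\<forall>S\<in>{S. S \<subseteq> {0..<int k} \<and> card S = m \<and> Q ((\<lambda>z. z + d0) ` periodic k S)}. rotate_mod k (- d0) (rotate_mod k d0 S) = S"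
      using rotate_mod_inverse[OF k] by auto
    show "\<forall>S\<in>{S. S \<subseteq> {0..<int k} \<and> card S = m \<and> Q (periodic k S)}. rotate_mod k d0 (rotate_mod k (- d0) S) = S"
      using rotate_mod_inverse[OF k, of _ "- d0"] by auto
    show "rotate_mod k d0 ` {S. S \<subseteq> {0..<int k} \<and> card S = m \<and> Q ((\<lambda>z. z + d0) ` periodic k S)}
          \<subseteq> {S. S \<subseteq> {0..<int k} \<and> card S = m \<and> Q (periodic k S)}"
      using rotate_mod_subset[OF k] card_rotate_mod[OF k] periodic_rotate_mod[OF k] by auto
    show "rotate_mod k (- d0) ` {S. S \<subseteq> {0..<int k} \<and> card S = m \<and> Q (periodic k S)}
          \<subseteq> {S. S \<subseteq> {0..<int k} \<and> card S = m \<and> Q ((\<lambda>z. z + d0) ` periodic k S)}"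
    proof (intro image_subsetI, clarify, intro conjI)
      fix S assume S: "S \<subseteq> {0..<int k}" "Q (periodic k S)" and m: "m = card S"
      show "rotate_mod k (- d0) S \<subseteq> {0..<int k}" using rotate_mod_subset[OF k] .
      show "card (rotate_mod k (- d0) S) = card S" using card_rotate_mod[OF k S(1)] .
      have "(\<lambda>z. z + d0) ` periodic k (rotate_mod k (- d0) S) = (\<lambda>z. z + d0) ` (\<lambda>z. z + - d0) ` periodic k S"
        using periodic_rotate_mod[OF k S(1)] by simp
      also have "\<dots> = periodic k S" by (simp add: image_image)
      finally show "Q ((\<lambda>z. z + d0) ` periodic k (rotate_mod k (- d0) S))" using S(2) by simp
    qed
  qed
  thus ?thesis by (rule bij_betw_same_card[symmetric])
qed

lemma mod_eq_imp_eq_small: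
  assumes "z1 mod (k::int) = z2 mod k" "\<bar>z1 - z2\<bar> < k" shows "z1 = z2"
proof -
  have "k dvd (z1 - z2)" using assms(1) by (simp add: mod_eq_dvd_iff)
  show ?thesis
  proof (rule ccontr)
    assume "z1 \<noteq> z2"
    hence "\<bar>k\<bar> \<le> \<bar>z1 - z2\<bar>" using dvd_imp_le_int \<open>k dvd (z1 - z2)\<close> by auto
    thus False using assms(2) by auto
  qed
qed

lemma card_periodic_window:
  assumes S: "S \<subseteq> {0..<int k}" and kW: "2 * W + 1 \<le> int k"
  shows "finite (periodic k S \<inter> {x - W .. x + W}) \<and> card (periodic k S \<inter> {x - W .. x + W}) \<le> card S"
proof -
  have fin: "finite (periodic k S \<inter> {x - W .. x + W})" by auto
  have inj: "inj_on (\<lambda>z. z mod int k) (periodic k S \<inter> {x - W .. x + W})"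
    by (rule inj_onI) (rule mod_eq_imp_eq_small, auto simp: kW, insert kW, auto)
  have "(\<lambda>z. z mod int k) ` (periodic k S \<inter> {x - W .. x + W}) \<subseteq> S" unfolding periodic_def by auto
  moreover have "finite S" using S finite_subset by blast
  ultimately show ?thesis using card_inj_on_le[OF inj] fin by auto
qed

lemma mod_neg_small: "- k \<le> z \<Longrightarrow> z < 0 \<Longrightarrow> z mod (k::int) = z + k"
proof -
  assume "- k \<le> z" "z < 0"
  thus ?thesis using mod_pos_pos_trivial[of "z+k" k] mod_add_self2[of z k] by simp
qed

lemma inj_on_image_add: "inj_on (\<lambda>R. (\<lambda>z::int. z + c) ` R) X"
  by (rule inj_onI) (simp add: inj_image_eq_iff inj_def)

lemma card_cycle_sets_mem:
  assumes k: "0 < k" and y: "y \<in> {0..<int k}"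
  shows "card {S \<in> cycle_sets a k m. y \<in> S} = card {S \<in> cycle_sets a k m. 0 \<in> S}"
proof -
  have e1: "{S \<in> cycle_sets a k m. 0 \<in> S} =
     {S. S \<subseteq> {0..<int k} \<and> card S = m \<and> (\<lambda>T. diff_free a T \<and> 0 \<in> T) (periodic k S)}"
    unfolding cycle_sets_def using periodic_iff_small[of _ k 0] k by auto
  have e2: "{S \<in> cycle_sets a k m. y \<in> S} =
     {S. S \<subseteq> {0..<int k} \<and> card S = m \<and> (\<lambda>T. diff_free a T \<and> 0 \<in> T) ((\<lambda>z. z + - y) ` periodic k S)}"
  proof -
    have "0 \<in> (\<lambda>z. z + - y) ` periodic k S \<longleftrightarrow> y \<in> periodic k S" for S by (auto simp: image_iff)
    thus ?thesis unfolding cycle_sets_def using periodic_iff_small[of _ k y] y diff_free_image_add_right[of a "- y"] by auto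
  qed
  show ?thesis unfolding e1 e2 by (rule card_cycle_pred_translate[OF k, symmetric])
qed

lemma cycle_count_marking:
  assumes k: "0 < k"
  shows "m * cycle_count a k m = k * card {S \<in> cycle_sets a k m. 0 \<in> S}"
proof -
  have "m * cycle_count a k m = (\<Sum>S\<in>cycle_sets a k m. card S)" unfolding cycle_count_def cycle_sets_def by simp
  also have "\<dots> = (\<Sum>S\<in>cycle_sets a k m. \<Sum>y\<in>{0..<int k}. if y \<in> S then 1 else 0)"
  proof (rule sum.cong[OF refl])
    fix S assume "S \<in> cycle_sets a k m"
    hence "S \<subseteq> {0..<int k}" unfolding cycle_sets_def by auto
    hence "S = {y \<in> {0..<int k}. y \<in> S}" by auto
    hence "card S = card {y \<in> {0..<int k}. y \<in> S}" by simp
    also have "\<dots> = (\<Sum>y\<in>{0..<int k}. if y \<in> S then 1 else 0)"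
      by (simp add: sum.inter_filter[symmetric])
    finally show "card S = (\<Sum>y\<in>{0..<int k}. if y \<in> S then 1 else 0)" .
  qed
  also have "\<dots> = (\<Sum>y\<in>{0..<int k}. \<Sum>S\<in>cycle_sets a k m. if y \<in> S then 1 else 0)"
    by (rule sum.swap)
  also have "\<dots> = (\<Sum>y\<in>{0..<int k}. card {S \<in> cycle_sets a k m. 0 \<in> S})"
  proof (rule sum.cong[OF refl])
    fix y assume y: "y \<in> {0..<int k}"
    have "(\<Sum>S\<in>cycle_sets a k m. if y \<in> S then 1 else 0) = card {S \<in> cycle_sets a k m. y \<in> S}"
      by (simp add: sum.inter_filter[symmetric] finite_cycle_sets)
    thus "(\<Sum>S\<in>cycle_sets a k m. if y \<in> S then 1 else (0::nat)) = card {S \<in> cycle_sets a k m. 0 \<in> S}"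
      using card_cycle_sets_mem[OF k y] by simp
  qed
  also have "\<dots> = k * card {S \<in> cycle_sets a k m. 0 \<in> S}" by simp
  finally show ?thesis .
qed

lemma cycle_count_0: "cycle_count a k 0 = 1"
proof -
  have "cycle_sets a k 0 = {{}}"
  proof (intro equalityI subsetI)
    fix S assume "S \<in> cycle_sets a k 0"
    hence "S \<subseteq> {0..<int k}" "card S = 0" unfolding cycle_sets_def by auto
    thus "S \<in> {{}}" using finite_subset by fastforce
  qed (auto simp: cycle_sets_def diff_free_def periodic_def)
  thus ?thesis unfolding cycle_count_def by simp
qed

section \<open>Recursions for the configuration counts\<close>

definition attach_block :: "int set \<Rightarrow> nat \<Rightarrow> int set \<Rightarrow> int set" where
  "attach_block C L S' = S' \<union> (\<lambda>c. (int L - Max C) + c) ` C"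

locale bounded_diffs =
  fixes a :: "nat set" and M :: int
  assumes M_ge_1: "1 \<le> M" and diff_pos: "\<forall>r\<in>a. 0 < r" and diff_le_M: "\<forall>r\<in>a. int r \<le> M"
begin

lemma attach_block_mem:
  assumes C: "C \<in> clusters a M (2 * int n * M)" "card C \<le> m" "Max C \<le> int L"
    and S': "S' \<in> line_sets a (nat (int L - Max C - M)) (m - card C)"
  shows "attach_block C L S' \<in> line_sets a (Suc L) m \<and> int L \<in> attach_block C L S' \<and> block M (attach_block C L S') (int L - Max C) C"
proof -
  define y where "y = int L - Max C"
  have cl: "cluster M C" and afC: "diff_free a C" using C unfolding clusters_def by auto
  have "S' \<subseteq> {0..<int (nat (y - M))}" using S' unfolding line_sets_def y_def by auto
  hence S'sub: "S' \<subseteq> {0..<y - M}" by (simp only: atLeastLessThan_int_nat)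
  have afS': "diff_free a S'" and cS': "card S' = m - card C" using S' unfolding line_sets_def by auto
  have y0: "0 \<le> y" using C(3) y_def by simp
  have Cy: "\<forall>c\<in>C. 0 \<le> c \<and> c \<le> Max C" using cl cluster_nonneg cluster_Max_ge by blast
  have sep: "\<forall>u\<in>S'. \<forall>v\<in>(\<lambda>c. y + c) ` C. u + M < v" using S'sub Cy by fastforce
  have af: "diff_free a (attach_block C L S')" unfolding attach_block_def y_def[symmetric]
    by (rule diff_free_Un_separated[OF afS' _ sep diff_le_M]) (simp add: diff_free_image_add_left afC)
  have disj: "S' \<inter> (\<lambda>c. y + c) ` C = {}" using sep M_ge_1 by fastforce
  have finS': "finite S'" using S'sub finite_subset by blast
  have finC: "finite C" using cl unfolding cluster_def by auto
  have card: "card (attach_block C L S') = m" unfolding attach_block_def y_def[symmetric]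
    using card_Un_disjoint[OF finS' finite_imageI[OF finC] disj] cS' card_image_add_left[of y C] C(2) by simp
  have sub: "attach_block C L S' \<subseteq> {0..<int (Suc L)}" unfolding attach_block_def y_def[symmetric]
  proof (intro subsetI)
    fix u assume "u \<in> S' \<union> (\<lambda>c. y + c) ` C"
    then consider "u \<in> S'" | c where "c \<in> C" "u = y + c" by auto
    thus "u \<in> {0..<int (Suc L)}"
    proof cases
      case 1
      have MC0: "0 \<le> Max C" using Cy cl unfolding cluster_def by auto
      have "u < int L - Max C - M" using 1 S'sub y_def by auto
      thus ?thesis using 1 S'sub M_ge_1 MC0 by auto
    next
      case 2 thus ?thesis using Cy y0 y_def by auto
    qed
  qed
  have LS: "int L \<in> attach_block C L S'" unfolding attach_block_def y_def[symmetric] using cluster_Max_in[OF cl] y_def by force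
  have block: "block M (attach_block C L S') y C" unfolding block_def attach_block_def y_def[symmetric]
  proof (intro equalityI subsetI)
    fix u assume "u \<in> (S' \<union> (\<lambda>c. y + c) ` C) \<inter> {y - M..y + Max C + M}"
    thus "u \<in> (\<lambda>c. y + c) ` C" using S'sub by auto
  next
    fix u assume "u \<in> (\<lambda>c. y + c) ` C"
    thus "u \<in> (S' \<union> (\<lambda>c. y + c) ` C) \<inter> {y - M..y + Max C + M}" using Cy M_ge_1 by auto
  qed
  show ?thesis using af card sub LS block unfolding line_sets_def y_def by auto
qed

lemma inj_on_attach_block: assumes "\<forall>c\<in>C. 0 \<le> c" shows "inj_on (attach_block C L) (line_sets a (nat (int L - Max C - M)) k)"
proof (rule inj_onI)
  fix S1 S2 assume S: "S1 \<in> line_sets a (nat (int L - Max C - M)) k" "S2 \<in> line_sets a (nat (int L - Max C - M)) k"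
    and eq: "attach_block C L S1 = attach_block C L S2"
  have "S1 \<subseteq> {0..<int (nat (int L - Max C - M))}" "S2 \<subseteq> {0..<int (nat (int L - Max C - M))}"
    using S unfolding line_sets_def by auto
  hence s: "S1 \<subseteq> {0..<int L - Max C - M}" "S2 \<subseteq> {0..<int L - Max C - M}" by (simp_all only: atLeastLessThan_int_nat)
  have "S1 = attach_block C L S1 \<inter> {..< int L - Max C - M}" "S2 = attach_block C L S2 \<inter> {..< int L - Max C - M}"
    using s assms M_ge_1 unfolding attach_block_def by auto
  thus "S1 = S2" using eq by simp
qed

lemma attach_block_surj:
  assumes mn: "m \<le> n" and S: "S \<in> line_sets a (Suc L) m" and LS: "int L \<in> S"
  shows "\<exists>C. C \<in> clusters a M (2 * int n * M) \<and> card C \<le> m \<and> Max C \<le> int L \<and>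
           (\<exists>S'\<in>line_sets a (nat (int L - Max C - M)) (m - card C). S = attach_block C L S')"
proof -
  define W where "W = int (m + 2) * M"
  have Ssub: "S \<subseteq> {0..<int (Suc L)}" and afS: "diff_free a S" and cS: "card S = m"
    using S unfolding line_sets_def by auto
  have finS: "finite S" using Ssub finite_subset by blast
  have fin: "finite (S \<inter> {int L - W .. int L + W})" using finS by auto
  have cq: "card (S \<inter> {int L - W .. int L + W}) \<le> m" using cS card_mono[OF finS] by auto
  have nf: "\<not> gap M S (int L)" using LS M_ge_1 unfolding gap_def by auto
  obtain y C where cl: "cluster M C" and block: "block M S y C" and cov: "y \<le> int L" "int L \<le> y + Max C + M"
    and Cb: "C \<subseteq> {0 .. 2 * int m * M}" and img: "(\<lambda>c. y + c) ` C \<subseteq> S \<inter> {int L - W .. int L + W}"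
    using block_exists[OF M_ge_1 W_def fin cq nf] by blast
  have MaxCin: "Max C \<in> C" using cluster_Max_in[OF cl] .
  have "y + Max C \<in> S" using block_mem[OF block cl MaxCin] .
  hence le1: "y + Max C \<le> int L" using Ssub by auto
  have "int L - y \<in> C" using block_window[OF block LS] cov M_ge_1 by auto
  hence le2: "int L - y \<le> Max C" using cluster_Max_ge[OF cl] by blast
  have yeq: "y = int L - Max C" using le1 le2 by simp
  have y0: "0 \<le> y" using block_mem[OF block cl, of 0] cl Ssub unfolding cluster_def by force
  have afC: "diff_free a C" using diff_free_subset[OF afS] img diff_free_image_add_left[of a y C] by auto
  have Cb2: "C \<subseteq> {0 .. 2 * int n * M}"
  proof -
    have "2 * int m * M \<le> 2 * int n * M" using mn M_ge_1 by (intro mult_right_mono) auto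
    thus ?thesis using Cb by auto
  qed
  have CClus: "C \<in> clusters a M (2 * int n * M)" using cl afC Cb2 unfolding clusters_def by auto
  have finC: "finite C" using cl unfolding cluster_def by auto
  have imgS: "(\<lambda>c. y + c) ` C \<subseteq> S" using img by auto
  have cC: "card C \<le> m" using card_mono[OF finS imgS] card_image_add_left[of y C] cS by simp
  define S' where "S' = S - (\<lambda>c. y + c) ` C"
  have S'sub: "S' \<subseteq> {0..<y - M}"
  proof
    fix u assume u: "u \<in> S'"
    hence uS: "u \<in> S" "u \<notin> (\<lambda>c. y + c) ` C" unfolding S'_def by auto
    have "u \<le> int L" "0 \<le> u" using uS Ssub by auto
    show "u \<in> {0..<y - M}"
    proof (rule ccontr)
      assume "u \<notin> {0..<y - M}"
      hence "y - M \<le> u" using \<open>0 \<le> u\<close> by auto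
      hence "u \<in> S \<inter> {y - M .. y + Max C + M}" using uS \<open>u \<le> int L\<close> yeq M_ge_1 by auto
      thus False using block uS unfolding block_def by auto
    qed
  qed
  have S'P: "S' \<in> line_sets a (nat (int L - Max C - M)) (m - card C)"
  proof -
    have "S' \<subseteq> {0..<int (nat (int L - Max C - M))}" using S'sub yeq by (simp only: atLeastLessThan_int_nat)
    moreover have "diff_free a S'" using diff_free_subset[OF afS] unfolding S'_def by auto
    moreover have "card S' = m - card C" unfolding S'_def
      using card_Diff_subset[OF finite_imageI[OF finC] imgS] card_image_add_left[of y C] cS by simp
    ultimately show ?thesis unfolding line_sets_def by auto
  qed
  have "S = attach_block C L S'" unfolding attach_block_def S'_def using imgS yeq by auto
  thus ?thesis using CClus cC le1 y0 yeq S'P by (intro exI[of _ C]) auto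
qed

text \<open>A configuration on {0..L} containing L ends with a block whose cluster C ends at L;
  removing it leaves a configuration on {0..<L - Max C - M}.\<close>
lemma line_count_Suc:
  assumes mn: "m \<le> n"
  shows "line_count a (Suc L) m = line_count a L m +
    (\<Sum>C\<in>clusters a M (2 * int n * M). if card C \<le> m \<and> Max C \<le> int L
        then line_count a (nat (int L - Max C - M)) (m - card C) else 0)"
proof -
  define CL where "CL = {C \<in> clusters a M (2 * int n * M). card C \<le> m \<and> Max C \<le> int L}"
  have finCL: "finite CL" using finite_clusters unfolding CL_def by auto
  have eq: "{S \<in> line_sets a (Suc L) m. int L \<in> S} = (\<Union>C\<in>CL. attach_block C L ` line_sets a (nat (int L - Max C - M)) (m - card C))"
  proof (intro equalityI subsetI)
    fix S assume "S \<in> {S \<in> line_sets a (Suc L) m. int L \<in> S}"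
    thus "S \<in> (\<Union>C\<in>CL. attach_block C L ` line_sets a (nat (int L - Max C - M)) (m - card C))"
      using attach_block_surj[OF mn] unfolding CL_def by blast
  next
    fix S assume "S \<in> (\<Union>C\<in>CL. attach_block C L ` line_sets a (nat (int L - Max C - M)) (m - card C))"
    thus "S \<in> {S \<in> line_sets a (Suc L) m. int L \<in> S}" using attach_block_mem unfolding CL_def by blast
  qed
  have disj: "attach_block C L ` line_sets a (nat (int L - Max C - M)) (m - card C) \<inter>
              attach_block D L ` line_sets a (nat (int L - Max D - M)) (m - card D) = {}"
    if "C \<in> CL" "D \<in> CL" "C \<noteq> D" for C D
  proof (rule ccontr)
    assume "\<not> ?thesis"
    then obtain S1 S2 where S1: "S1 \<in> line_sets a (nat (int L - Max C - M)) (m - card C)"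
      and S2: "S2 \<in> line_sets a (nat (int L - Max D - M)) (m - card D)" and e: "attach_block C L S1 = attach_block D L S2" by blast
    have r1: "block M (attach_block C L S1) (int L - Max C) C" using attach_block_mem[OF _ _ _ S1] that unfolding CL_def by auto
    have r2: "block M (attach_block C L S1) (int L - Max D) D" using attach_block_mem[OF _ _ _ S2] that e unfolding CL_def by auto
    have cC: "cluster M C" "cluster M D" using that unfolding CL_def clusters_def by auto
    have "0 \<le> Max C" "0 \<le> Max D" using cC cluster_Max_ge unfolding cluster_def by auto
    hence "int L - Max C = int L - Max D \<and> C = D"
      using block_unique[OF _ cC r1 r2, of "int L"] M_ge_1 by auto
    thus False using that by simp
  qed
  have "card {S \<in> line_sets a (Suc L) m. int L \<in> S} =
        (\<Sum>C\<in>CL. card (attach_block C L ` line_sets a (nat (int L - Max C - M)) (m - card C)))"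
    unfolding eq by (rule card_UN_disjoint[OF finCL]) (simp_all add: finite_imageI finite_line_sets disj)
  also have "\<dots> = (\<Sum>C\<in>CL. line_count a (nat (int L - Max C - M)) (m - card C))"
  proof (rule sum.cong[OF refl])
    fix C assume "C \<in> CL"
    hence "\<forall>c\<in>C. 0 \<le> c" unfolding CL_def clusters_def cluster_def by auto
    thus "card (attach_block C L ` line_sets a (nat (int L - Max C - M)) (m - card C)) = line_count a (nat (int L - Max C - M)) (m - card C)"
      unfolding line_count_def by (intro card_image inj_on_attach_block)
  qed
  also have "\<dots> = (\<Sum>C\<in>clusters a M (2 * int n * M). if card C \<le> m \<and> Max C \<le> int L
        then line_count a (nat (int L - Max C - M)) (m - card C) else 0)"
    unfolding CL_def by (simp add: sum.inter_filter[OF finite_clusters])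
  finally show ?thesis using line_count_Suc_split by simp
qed

lemma diff_free_periodic_iff:
  assumes S: "S \<subseteq> {0..<int k - M}"
  shows "diff_free a (periodic k S) \<longleftrightarrow> diff_free a S"
proof
  have "S \<subseteq> periodic k S"
  proof
    fix x assume "x \<in> S"
    hence "0 \<le> x" "x < int k" using S M_ge_1 by auto
    thus "x \<in> periodic k S" unfolding periodic_def using \<open>x \<in> S\<close> by simp
  qed
  thus "diff_free a (periodic k S) \<Longrightarrow> diff_free a S" using diff_free_subset by blast
next
  assume af: "diff_free a S"
  show "diff_free a (periodic k S)" unfolding diff_free_def
  proof (intro ballI)
    fix u r assume u: "u \<in> periodic k S" and r: "r \<in> a"
    define i where "i = u mod int k"
    have iS: "i \<in> S" using u unfolding periodic_def i_def by simp
    have "int r \<le> M" using diff_le_M r by auto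
    moreover have "0 \<le> i" "i < int k - M" using iS S by auto
    ultimately have ir: "0 \<le> i + int r" "i + int r < int k" by auto
    have "(u + int r) mod int k = (i + int r) mod int k" unfolding i_def by (simp add: mod_add_left_eq)
    also have "\<dots> = i + int r" using ir by simp
    finally show "u + int r \<notin> periodic k S" using af iS r unfolding diff_free_def periodic_def by auto
  qed
qed

lemma gap_periodic_0_iff:
  assumes S: "S \<subseteq> {0..<int k}" and k: "M < int k"
  shows "gap M (periodic k S) 0 \<longleftrightarrow> S \<subseteq> {1..<int k - M}"
proof
  assume f: "gap M (periodic k S) 0"
  show "S \<subseteq> {1..<int k - M}"
  proof
    fix x assume x: "x \<in> S"
    have x0: "0 \<le> x" "x < int k" using x S by auto
    have "x \<noteq> 0"
    proof
      assume "x = 0"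
      hence "0 \<in> periodic k S \<inter> {0 - M .. 0}" using x M_ge_1 unfolding periodic_def by simp
      thus False using f unfolding gap_def by blast
    qed
    moreover have "x < int k - M"
    proof (rule ccontr)
      assume "\<not> x < int k - M"
      hence "(x - int k) mod int k = x - int k + int k" using x0 by (intro mod_neg_small) auto
      hence "x - int k \<in> periodic k S" using x unfolding periodic_def by simp
      moreover have "x - int k \<in> {0 - M .. 0}" using x0 \<open>\<not> x < int k - M\<close> by auto
      ultimately show False using f unfolding gap_def by blast
    qed
    ultimately show "x \<in> {1..<int k - M}" using x0 by auto
  qed
next
  assume S1: "S \<subseteq> {1..<int k - M}"
  show "gap M (periodic k S) 0" unfolding gap_def
  proof (rule ccontr)
    assume "periodic k S \<inter> {0 - M..0} \<noteq> {}"
    then obtain z where z: "z mod int k \<in> S" "- M \<le> z" "z \<le> 0" unfolding periodic_def by auto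
    show False
    proof (cases "z = 0")
      case True thus False using z S1 by auto
    next
      case False
      hence "z mod int k = z + int k" using z k by (intro mod_neg_small) auto
      thus False using z S1 by auto
    qed
  qed
qed

lemma card_cycle_sets_gap_0:
  assumes k: "M + 1 \<le> int k"
  shows "card {S \<in> cycle_sets a k m. gap M (periodic k S) 0} = line_count a (nat (int k - M - 1)) m"
proof -
  have eqset: "{S \<in> cycle_sets a k m. gap M (periodic k S) 0} = (\<lambda>R. (\<lambda>z. z + 1) ` R) ` line_sets a (nat (int k - M - 1)) m"
  proof (intro equalityI subsetI)
    fix S assume "S \<in> {S \<in> cycle_sets a k m. gap M (periodic k S) 0}"
    hence S: "S \<subseteq> {0..<int k}" "diff_free a (periodic k S)" "card S = m" "gap M (periodic k S) 0"
      unfolding cycle_sets_def by auto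
    have S1: "S \<subseteq> {1..<int k - M}" using gap_periodic_0_iff[OF S(1)] S(4) k by auto
    have "S \<subseteq> {0..<int k - M}" using S1 by auto
    hence afS: "diff_free a S" using diff_free_periodic_iff[of S k] S(2) by auto
    define R where "R = (\<lambda>z. z + - 1) ` S"
    have SR: "S = (\<lambda>z. z + 1) ` R" unfolding R_def by (auto simp: image_image)
    have "R \<subseteq> {0..<int (nat (int k - M - 1))}" using S1 k unfolding R_def by auto
    moreover have "diff_free a R" unfolding R_def using afS diff_free_image_add_right by blast
    moreover have "card R = m" unfolding R_def using S(3) card_image_add_left[of "-1" S] by (simp add: add.commute)
    ultimately have "R \<in> line_sets a (nat (int k - M - 1)) m" unfolding line_sets_def by auto
    thus "S \<in> (\<lambda>R. (\<lambda>z. z + 1) ` R) ` line_sets a (nat (int k - M - 1)) m" using SR by auto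
  next
    fix S assume "S \<in> (\<lambda>R. (\<lambda>z. z + 1) ` R) ` line_sets a (nat (int k - M - 1)) m"
    then obtain R where R: "R \<in> line_sets a (nat (int k - M - 1)) m" and SR: "S = (\<lambda>z. z + 1) ` R" by auto
    have Rs: "R \<subseteq> {0..<int (nat (int k - M - 1))}" "diff_free a R" "card R = m" using R unfolding line_sets_def by auto
    have S1: "S \<subseteq> {1..<int k - M}" using Rs(1) k unfolding SR by auto
    hence S0: "S \<subseteq> {0..<int k}" using M_ge_1 by auto
    have "diff_free a S" unfolding SR using Rs(2) diff_free_image_add_right by blast
    moreover have "S \<subseteq> {0..<int k - M}" using S1 by auto
    ultimately have "diff_free a (periodic k S)" using diff_free_periodic_iff[of S k] by auto
    moreover have "card S = m" unfolding SR using Rs(3) card_image_add_left[of 1 R] by (simp add: add.commute)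
    moreover have "gap M (periodic k S) 0" using gap_periodic_0_iff[OF S0] S1 k by auto
    ultimately show "S \<in> {S \<in> cycle_sets a k m. gap M (periodic k S) 0}" using S0 unfolding cycle_sets_def by auto
  qed
  show ?thesis unfolding eqset line_count_def by (rule card_image[OF inj_on_image_add])
qed

lemma periodic_block_0_iff:
  assumes S: "S \<subseteq> {0..<int k}" and cl: "cluster M C" and k: "Max C + 2 * M < int k"
  shows "block M (periodic k S) 0 C \<longleftrightarrow> S \<inter> {0..Max C + M} = C \<and> S \<inter> {int k - M..<int k} = {}"
proof -
  have Cn: "\<forall>c\<in>C. 0 \<le> c \<and> c \<le> Max C" using cl cluster_nonneg cluster_Max_ge by blast
  have id: "(\<lambda>c. 0 + c) ` C = C" by simp
  have MC0: "0 \<le> Max C" using Cn cluster_Max_in[OF cl] by auto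
  have in0: "u \<in> periodic k S \<longleftrightarrow> u \<in> S" if "0 \<le> u" "u \<le> Max C + M" for u
    using periodic_iff_small[OF S, of u] that k M_ge_1 by auto
  have inneg: "u \<in> periodic k S \<longleftrightarrow> u + int k \<in> S" if "- M \<le> u" "u < 0" for u
  proof -
    have "u mod int k = u + int k" using that k M_ge_1 MC0 by (intro mod_neg_small) auto
    thus ?thesis unfolding periodic_def by simp
  qed
  show ?thesis unfolding block_def id
  proof
    assume r: "periodic k S \<inter> {0 - M..0 + Max C + M} = C"
    have 1: "S \<inter> {0..Max C + M} = C"
    proof (intro equalityI subsetI)
      fix u assume "u \<in> S \<inter> {0..Max C + M}"
      thus "u \<in> C" using in0 r M_ge_1 by auto
    next
      fix u assume u: "u \<in> C"
      hence "u \<in> periodic k S" using r by auto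
      thus "u \<in> S \<inter> {0..Max C + M}" using in0 u Cn M_ge_1 by auto
    qed
    have 2: "S \<inter> {int k - M..<int k} = {}"
    proof (rule ccontr)
      assume "S \<inter> {int k - M..<int k} \<noteq> {}"
      then obtain z where z: "z \<in> S" "int k - M \<le> z" "z < int k" by auto
      hence "z - int k \<in> periodic k S" using inneg[of "z - int k"] by auto
      hence "z - int k \<in> periodic k S \<inter> {0 - M..0 + Max C + M}" using z MC0 M_ge_1 by auto
      hence "z - int k \<in> C" using r by blast
      thus False using Cn z by auto
    qed
    show "S \<inter> {0..Max C + M} = C \<and> S \<inter> {int k - M..<int k} = {}" using 1 2 by simp
  next
    assume r: "S \<inter> {0..Max C + M} = C \<and> S \<inter> {int k - M..<int k} = {}"
    show "periodic k S \<inter> {0 - M..0 + Max C + M} = C"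
    proof (intro equalityI subsetI)
      fix u assume u: "u \<in> periodic k S \<inter> {0 - M..0 + Max C + M}"
      show "u \<in> C"
      proof (cases "u < 0")
        case True
        hence "u + int k \<in> S" using inneg u by auto
        moreover have "u + int k \<in> {int k - M..<int k}" using True u by auto
        ultimately show ?thesis using r by blast
      next
        case False thus ?thesis using in0 u r by auto
      qed
    next
      fix u assume u: "u \<in> C"
      hence "u \<in> S" using r by auto
      thus "u \<in> periodic k S \<inter> {0 - M..0 + Max C + M}" using in0 u Cn M_ge_1 by auto
    qed
  qed
qed

definition extend_cluster :: "int set \<Rightarrow> int set \<Rightarrow> int set" where
  "extend_cluster C R = C \<union> (\<lambda>z. z + (Max C + M + 1)) ` R"

lemma extend_cluster_mem_cycle_sets:
  assumes cl: "cluster M C" and afC: "diff_free a C" and cm: "card C \<le> m"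
    and kk: "Max C + 2 * M < int k"
    and R: "R \<in> line_sets a (nat (int k - Max C - 2 * M - 1)) (m - card C)"
  shows "extend_cluster C R \<in> cycle_sets a k m" "block M (periodic k (extend_cluster C R)) 0 C"
proof -
  define D where "D = Max C + M + 1"
  define S where "S = extend_cluster C R"
  have Cn: "\<forall>c\<in>C. 0 \<le> c \<and> c \<le> Max C" using cl cluster_nonneg cluster_Max_ge by blast
  have MC0: "0 \<le> Max C" using Cn cl unfolding cluster_def by auto
  have finC: "finite C" using cl unfolding cluster_def by auto
  have R0: "R \<subseteq> {0..<int (nat (int k - Max C - 2 * M - 1))}" "diff_free a R" "card R = m - card C"
    using R unfolding line_sets_def by auto
  have Rs: "R \<subseteq> {0..<int k - Max C - 2 * M - 1}" using R0(1) by (simp only: atLeastLessThan_int_nat)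
  have finR: "finite R" using Rs finite_subset by blast
  have SkM: "S \<subseteq> {0..<int k - M}"
  proof
    fix x assume "x \<in> S"
    then consider "x \<in> C" | z where "z \<in> R" "x = z + D" unfolding S_def extend_cluster_def D_def by auto
    thus "x \<in> {0..<int k - M}"
    proof cases
      case 1 thus ?thesis using Cn kk M_ge_1 by fastforce
    next
      case 2
      have "0 \<le> z" "z < int k - Max C - 2 * M - 1" using 2(1) Rs by auto
      thus ?thesis using 2(2) MC0 M_ge_1 unfolding D_def by auto
    qed
  qed
  have S0: "S \<subseteq> {0..<int k}" using SkM M_ge_1 by auto
  have sep: "\<forall>u\<in>C. \<forall>v\<in>(\<lambda>z. z + D) ` R. u + M < v" using Cn Rs unfolding D_def by fastforce
  have afS: "diff_free a S" unfolding S_def extend_cluster_def D_def[symmetric]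
    by (rule diff_free_Un_separated[OF afC _ sep diff_le_M]) (simp add: diff_free_image_add_right R0(2))
  have disj: "C \<inter> (\<lambda>z. z + D) ` R = {}" using sep M_ge_1 by fastforce
  have cS: "card S = m" unfolding S_def extend_cluster_def D_def[symmetric]
    using card_Un_disjoint[OF finC finite_imageI[OF finR] disj] card_image_add_left[of D R] R0(3) cm
    by (simp add: add.commute)
  have "S \<inter> {0..Max C + M} = C"
    using Rs Cn M_ge_1 unfolding S_def extend_cluster_def by auto
  moreover have "S \<inter> {int k - M..<int k} = {}" using SkM by auto
  ultimately show "block M (periodic k S) 0 C" using periodic_block_0_iff[OF S0 cl kk] by simp
  have "diff_free a (periodic k S)" using diff_free_periodic_iff[OF SkM] afS by simp
  thus "S \<in> cycle_sets a k m" using S0 cS unfolding cycle_sets_def by auto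
qed

lemma cycle_sets_block_0_imp_extend_cluster:
  assumes cl: "cluster M C" and kk: "Max C + 2 * M < int k"
    and S: "S \<in> cycle_sets a k m" "block M (periodic k S) 0 C"
  shows "card C \<le> m \<and> (\<exists>R\<in>line_sets a (nat (int k - Max C - 2 * M - 1)) (m - card C). S = extend_cluster C R)"
proof -
  define D where "D = Max C + M + 1"
  have Cn: "\<forall>c\<in>C. 0 \<le> c \<and> c \<le> Max C" using cl cluster_nonneg cluster_Max_ge by blast
  have finC: "finite C" using cl unfolding cluster_def by auto
  have S: "S \<subseteq> {0..<int k}" "diff_free a (periodic k S)" "card S = m" "block M (periodic k S) 0 C"
    using S unfolding cycle_sets_def by auto
  have r: "S \<inter> {0..Max C + M} = C" "S \<inter> {int k - M..<int k} = {}"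
    using periodic_block_0_iff[OF S(1) cl kk] S(4) by auto
  have SkM: "S \<subseteq> {0..<int k - M}"
  proof
    fix x assume x: "x \<in> S"
    hence "0 \<le> x" "x < int k" using S(1) by auto
    moreover have "x \<notin> {int k - M..<int k}" using x r(2) by auto
    ultimately show "x \<in> {0..<int k - M}" by auto
  qed
  have afS: "diff_free a S" using diff_free_periodic_iff[OF SkM] S(2) by simp
  define R where "R = {z. 0 \<le> z \<and> z + D \<in> S}"
  have SR: "S = extend_cluster C R"
  proof (intro equalityI subsetI)
    fix x assume x: "x \<in> S"
    show "x \<in> extend_cluster C R"
    proof (cases "x \<le> Max C + M")
      case True
      have "x \<in> S \<inter> {0..Max C + M}" using x True S(1) by auto
      thus ?thesis using r(1) unfolding extend_cluster_def by auto
    next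
      case False
      hence "x - D \<in> R" using x unfolding R_def D_def by auto
      thus ?thesis unfolding extend_cluster_def D_def[symmetric] by (intro UnI2 image_eqI[of _ _ "x - D"]) auto
    qed
  next
    fix x assume "x \<in> extend_cluster C R"
    thus "x \<in> S" using r(1) unfolding extend_cluster_def D_def[symmetric] R_def by auto
  qed
  have Rsub: "R \<subseteq> {0..<int (nat (int k - Max C - 2 * M - 1))}"
  proof
    fix z assume "z \<in> R"
    hence "0 \<le> z" "z + D \<in> S" unfolding R_def by auto
    hence "z + D < int k - M" using SkM by auto
    thus "z \<in> {0..<int (nat (int k - Max C - 2 * M - 1))}" using \<open>0 \<le> z\<close> unfolding D_def by auto
  qed
  have imgR: "(\<lambda>z. z + D) ` R \<subseteq> S" unfolding R_def by auto
  have afR: "diff_free a R" using diff_free_subset[OF afS imgR] diff_free_image_add_right by blast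
  have finR: "finite R" using Rsub finite_subset by blast
  have disj: "C \<inter> (\<lambda>z. z + D) ` R = {}" using Cn M_ge_1 unfolding R_def D_def by fastforce
  have "card S = card C + card R" unfolding SR extend_cluster_def D_def[symmetric]
    using card_Un_disjoint[OF finC finite_imageI[OF finR] disj] card_image_add_left[of D R]
    by (simp add: add.commute)
  hence "card C \<le> m" "card R = m - card C" using S(3) by simp_all
  moreover have "R \<in> line_sets a (nat (int k - Max C - 2 * M - 1)) (m - card C)"
    using Rsub afR \<open>card R = m - card C\<close> unfolding line_sets_def by blast
  ultimately show ?thesis using SR by blast
qed

lemma inj_on_extend_cluster:
  assumes cl: "cluster M C"
  shows "inj_on (extend_cluster C) {R. R \<subseteq> {0..}}"
proof (rule inj_onI)
  fix R1 R2 assume R: "R1 \<in> {R. R \<subseteq> {0..}}" "R2 \<in> {R. R \<subseteq> {0..}}"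
    and e: "extend_cluster C R1 = extend_cluster C R2"
  have noC: "x + (Max C + M + 1) \<notin> C" if "0 \<le> x" for x
    using that cluster_Max_ge[OF cl] M_ge_1 by force
  have "R = {z. 0 \<le> z \<and> z + (Max C + M + 1) \<in> extend_cluster C R}" if "R \<subseteq> {0..}" for R
    using that noC unfolding extend_cluster_def by auto
  thus "R1 = R2" using R e by (metis mem_Collect_eq)
qed

lemma card_cycle_sets_block_0:
  assumes C: "C \<in> clusters a M B" and k: "B + 2 * M + 1 \<le> int k"
  shows "card {S \<in> cycle_sets a k m. block M (periodic k S) 0 C} =
    (if card C \<le> m then line_count a (nat (int k - Max C - 2 * M - 1)) (m - card C) else 0)"
proof -
  have cl: "cluster M C" and afC: "diff_free a C" and CB: "C \<subseteq> {0..B}"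
    using C unfolding clusters_def by auto
  have kk: "Max C + 2 * M < int k" using CB cluster_Max_in[OF cl] k by auto
  show ?thesis
  proof (cases "card C \<le> m")
    case True
    have "{S \<in> cycle_sets a k m. block M (periodic k S) 0 C} =
        extend_cluster C ` line_sets a (nat (int k - Max C - 2 * M - 1)) (m - card C)"
      using cycle_sets_block_0_imp_extend_cluster[OF cl kk] extend_cluster_mem_cycle_sets[OF cl afC True kk]
      by blast
    moreover have "inj_on (extend_cluster C) (line_sets a (nat (int k - Max C - 2 * M - 1)) (m - card C))"
      by (rule inj_on_subset[OF inj_on_extend_cluster[OF cl]]) (auto simp: line_sets_def)
    ultimately show ?thesis using True by (simp add: line_count_def card_image)
  next
    case False
    hence "{S \<in> cycle_sets a k m. block M (periodic k S) 0 C} = {}"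
      using cycle_sets_block_0_imp_extend_cluster[OF cl kk] by blast
    thus ?thesis using False by (simp only: card.empty if_False)
  qed
qed

lemma card_cycle_sets_block_translate:
  assumes k: "0 < k"
  shows "card {S \<in> cycle_sets a k m. block M (periodic k S) (- d) C} = card {S \<in> cycle_sets a k m. block M (periodic k S) 0 C}"
proof -
  have e1: "{S \<in> cycle_sets a k m. block M (periodic k S) 0 C} =
     {S. S \<subseteq> {0..<int k} \<and> card S = m \<and> (\<lambda>T. diff_free a T \<and> block M T 0 C) (periodic k S)}"
    unfolding cycle_sets_def by auto
  have e2: "{S \<in> cycle_sets a k m. block M (periodic k S) (- d) C} =
     {S. S \<subseteq> {0..<int k} \<and> card S = m \<and> (\<lambda>T. diff_free a T \<and> block M T 0 C) ((\<lambda>z. z + d) ` periodic k S)}"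
    unfolding cycle_sets_def using block_image_add_right[of M d _ "- d" C] diff_free_image_add_right[of a d] by auto
  show ?thesis unfolding e1 e2 by (rule card_cycle_pred_translate[OF k, symmetric])
qed

text \<open>The cluster is short because the window around 0 contains at most m points.\<close>
lemma cycle_sets_block_near_0:
  assumes SC: "S \<in> cycle_sets a k m" and mn: "m \<le> n" and kW: "2 * (int (m + 2) * M) + 1 \<le> int k"
    and nf: "\<not> gap M (periodic k S) 0"
  shows "\<exists>C y. C \<in> clusters a M (2 * int n * M) \<and> - y \<in> {0..Max C + M} \<and> block M (periodic k S) y C"
proof -
  have S: "S \<subseteq> {0..<int k}" "diff_free a (periodic k S)" "card S = m"
    using SC unfolding cycle_sets_def by auto
  define W where "W = int (m + 2) * M"
  have pw: "finite (periodic k S \<inter> {0 - W .. 0 + W})" "card (periodic k S \<inter> {0 - W .. 0 + W}) \<le> m"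
    using card_periodic_window[OF S(1), of W 0] kW S(3) unfolding W_def by auto
  obtain y C where cl: "cluster M C" and r: "block M (periodic k S) y C" and cov: "y \<le> 0" "0 \<le> y + Max C + M"
    and Cb: "C \<subseteq> {0 .. 2 * int m * M}" and img: "(\<lambda>c. y + c) ` C \<subseteq> periodic k S \<inter> {0 - W .. 0 + W}"
    using block_exists[OF M_ge_1 W_def pw nf] by blast
  have afC: "diff_free a C" using diff_free_subset[OF S(2)] img diff_free_image_add_left[of a y C] by auto
  have "2 * int m * M \<le> 2 * int n * M" using mn M_ge_1 by (intro mult_right_mono) auto
  hence "C \<in> clusters a M (2 * int n * M)" using cl afC Cb unfolding clusters_def by auto
  thus ?thesis using cov r by (intro exI[of _ C] exI[of _ y]) auto
qed

lemma cycle_count_split: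
  assumes mn: "m \<le> n" and kW: "2 * (int (m + 2) * M) + 1 \<le> int k"
  defines "IX \<equiv> Sigma (clusters a M (2 * int n * M)) (\<lambda>C. {0..Max C + M})"
  shows "cycle_count a k m = card {S \<in> cycle_sets a k m. gap M (periodic k S) 0} +
    (\<Sum>(C, d)\<in>IX. card {S \<in> cycle_sets a k m. block M (periodic k S) (- d) C})"
proof -
  define Fr where "Fr = {S \<in> cycle_sets a k m. gap M (periodic k S) 0}"
  define G where "G = (\<lambda>(C, d). {S \<in> cycle_sets a k m. block M (periodic k S) (- d) C})"
  have finIX: "finite IX" unfolding IX_def using finite_clusters by auto
  have cover: "cycle_sets a k m = Fr \<union> (\<Union>p\<in>IX. G p)"
  proof (intro equalityI subsetI)
    fix S assume SC: "S \<in> cycle_sets a k m"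
    show "S \<in> Fr \<union> (\<Union>p\<in>IX. G p)"
    proof (cases "gap M (periodic k S) 0")
      case True thus ?thesis using SC unfolding Fr_def by auto
    next
      case False
      then obtain C y where "C \<in> clusters a M (2 * int n * M)" "- y \<in> {0..Max C + M}" "block M (periodic k S) y C"
        using cycle_sets_block_near_0[OF SC mn kW] by blast
      hence "(C, - y) \<in> IX" "S \<in> G (C, - y)" using SC unfolding IX_def G_def by auto
      thus ?thesis by blast
    qed
  qed (auto simp: Fr_def G_def)
  have clIX: "cluster M C" "0 \<le> d" "d \<le> Max C + M" if "(C, d) \<in> IX" for C d
    using that unfolding IX_def clusters_def by auto
  have disj1: "Fr \<inter> (\<Union>p\<in>IX. G p) = {}"
  proof (rule ccontr)
    assume "\<not> ?thesis"
    then obtain S C d where "S \<in> Fr" "(C, d) \<in> IX" "S \<in> G (C, d)" by auto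
    hence "gap M (periodic k S) 0" "block M (periodic k S) (- d) C" "cluster M C" "0 \<le> d" "d \<le> Max C + M"
      using clIX unfolding Fr_def G_def by auto
    thus False using block_not_gap[of M C "periodic k S" "- d" 0] by auto
  qed
  have disj2: "G p \<inter> G q = {}" if "p \<in> IX" "q \<in> IX" "p \<noteq> q" for p q
  proof (rule ccontr)
    obtain C d D e where pq: "p = (C, d)" "q = (D, e)" by (cases p, cases q) auto
    assume "\<not> ?thesis"
    then obtain S where "block M (periodic k S) (- d) C" "block M (periodic k S) (- e) D"
      unfolding G_def pq by auto
    moreover have "cluster M C" "cluster M D" "0 \<le> d" "d \<le> Max C + M" "0 \<le> e" "e \<le> Max D + M"
      using that clIX unfolding pq by auto
    ultimately have "- d = - e \<and> C = D"
      using block_unique[of M C D "periodic k S" "- d" "- e" 0] M_ge_1 by auto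
    thus False using that pq by auto
  qed
  have finG: "finite (G p)" for p unfolding G_def by (cases p) (auto intro: finite_subset[OF _ finite_cycle_sets])
  have "cycle_count a k m = card Fr + card (\<Union>p\<in>IX. G p)"
  proof -
    have "finite Fr" unfolding Fr_def by (auto intro: finite_subset[OF _ finite_cycle_sets])
    moreover have "finite (\<Union>p\<in>IX. G p)" using finG finIX by auto
    ultimately show ?thesis unfolding cycle_count_def cover by (rule card_Un_disjoint[OF _ _ disj1])
  qed
  also have "card (\<Union>p\<in>IX. G p) = (\<Sum>p\<in>IX. card (G p))"
    by (rule card_UN_disjoint[OF finIX]) (auto simp: finG disj2)
  finally show ?thesis unfolding Fr_def G_def by (simp add: case_prod_beta)
qed

text \<open>Classify a cyclic configuration by what it looks like at position 0: either 0 is preceded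
  by a gap, and cutting there leaves a configuration on a line, or 0 lies in a block with cluster
  C starting at -d; by rotation the number of the latter does not depend on d.\<close>
lemma cycle_count_eq:
  assumes mn: "m \<le> n" and k: "2 * (int n + 3) * M + 2 \<le> int k"
  shows "cycle_count a k m = line_count a (nat (int k - M - 1)) m +
    (\<Sum>C\<in>clusters a M (2 * int n * M). nat (Max C + M + 1) *
       (if card C \<le> m then line_count a (nat (int k - Max C - 2 * M - 1)) (m - card C) else 0))"
proof -
  define B where "B = 2 * int n * M"
  have nM: "0 \<le> int n * M" using M_ge_1 by simp
  have "int (m + 2) * M \<le> (int n + 2) * M" using mn M_ge_1 by (intro mult_right_mono) auto
  moreover have "2 * ((int n + 2) * M) + 1 \<le> 2 * (int n + 3) * M + 2" using M_ge_1 by (simp add: algebra_simps)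
  ultimately have kW: "2 * (int (m + 2) * M) + 1 \<le> int k" using k by linarith
  have kB: "B + 2 * M + 1 \<le> int k" using k M_ge_1 nM unfolding B_def by (simp add: algebra_simps)
  have kM: "M + 1 \<le> int k" using kB nM unfolding B_def by simp
  have kpos: "0 < k" using kM M_ge_1 by simp
  have "(\<Sum>(C, d)\<in>Sigma (clusters a M B) (\<lambda>C. {0..Max C + M}).
          card {S \<in> cycle_sets a k m. block M (periodic k S) (- d) C}) =
      (\<Sum>C\<in>clusters a M B. \<Sum>d\<in>{0..Max C + M}. card {S \<in> cycle_sets a k m. block M (periodic k S) 0 C})"
    by (subst sum.Sigma[symmetric]) (auto simp: finite_clusters card_cycle_sets_block_translate[OF kpos])
  also have "\<dots> = (\<Sum>C\<in>clusters a M B. nat (Max C + M + 1) *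
       (if card C \<le> m then line_count a (nat (int k - Max C - 2 * M - 1)) (m - card C) else 0))"
    by (rule sum.cong[OF refl]) (simp add: card_cycle_sets_block_0[OF _ kB])
  finally show ?thesis
    using cycle_count_split[OF mn kW] card_cycle_sets_gap_0[OF kM] unfolding B_def by simp
qed
end

section \<open>Independent sets of the disjoint union\<close>

lemma circ_indep_iff_diff_free:
  assumes pos: "\<forall>r\<in>a. 0 < r" and diff_le_M: "\<forall>r\<in>a. int r \<le> M" and k: "M < int k"
    and B: "B \<subseteq> {0..<k}"
  shows "(\<forall>i\<in>B. \<forall>j\<in>B. \<not> circ_adj a k i j) \<longleftrightarrow> diff_free a (periodic k (int ` B))"
proof
  assume nadj: "\<forall>i\<in>B. \<forall>j\<in>B. \<not> circ_adj a k i j"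
  show "diff_free a (periodic k (int ` B))" unfolding diff_free_def
  proof (intro ballI notI)
    fix u r assume u: "u \<in> periodic k (int ` B)" and r: "r \<in> a" and ur: "u + int r \<in> periodic k (int ` B)"
    have k0: "0 < int k" using k diff_le_M r pos by force
    define i where "i = nat (u mod int k)"
    define j where "j = nat ((u + int r) mod int k)"
    have iB: "i \<in> B" using u unfolding periodic_def i_def by auto
    have jB: "j \<in> B" using ur unfolding periodic_def j_def by auto
    have ii: "int i = u mod int k" unfolding i_def using k0 by simp
    have jj: "int j = (u + int r) mod int k" unfolding j_def using k0 by simp
    have rk: "0 < int r" "int r < int k" using pos diff_le_M r k by force+
    have "(int j - int i) mod int k = ((u + int r) - u) mod int k" unfolding ii jj
      by (simp add: mod_diff_eq)
    hence d: "(int j - int i) mod int k = int r mod int k" by simp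
    have "i \<noteq> j"
    proof
      assume "i = j"
      hence "int r mod int k = 0" using d by simp
      thus False using rk by simp
    qed
    hence "circ_adj a k i j" unfolding circ_adj_def using d r by blast
    thus False using nadj iB jB by blast
  qed
next
  assume af: "diff_free a (periodic k (int ` B))"
  show "\<forall>i\<in>B. \<forall>j\<in>B. \<not> circ_adj a k i j"
  proof (intro ballI notI)
    fix i j assume iB: "i \<in> B" and jB: "j \<in> B" and adj: "circ_adj a k i j"
    have mem: "int x \<in> periodic k (int ` B)" if "x \<in> B" for x using that B unfolding periodic_def by auto
    have key: False if xB: "x \<in> B" "y \<in> B" and r: "r \<in> a" and e: "(int y - int x) mod int k = int r mod int k" for x y r
    proof -
      have "(int x + int r) mod int k = (int x + int r mod int k) mod int k" by (simp add: mod_add_right_eq)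
      also have "\<dots> = (int x + (int y - int x) mod int k) mod int k" using e by simp
      also have "\<dots> = int y mod int k" by (simp add: mod_add_right_eq)
      finally have "int x + int r \<in> periodic k (int ` B)" using mem[OF xB(2)] unfolding periodic_def by simp
      thus False using af mem[OF xB(1)] r unfolding diff_free_def by blast
    qed
    from adj obtain r where r: "r \<in> a" and "(int i - int j) mod int k = int r mod int k \<or> (int j - int i) mod int k = int r mod int k"
      unfolding circ_adj_def by blast
    thus False using key[OF jB iB r] key[OF iB jB r] by blast
  qed
qed

definition indep_sets :: "nat set \<Rightarrow> nat \<Rightarrow> (nat \<Rightarrow> nat) \<Rightarrow> nat \<Rightarrow> (nat \<times> nat) set set" where
  "indep_sets a s k n = {S. union_indep a s k S \<and> card S = n}"

lemma union_verts_eq: "union_verts s k = Sigma {..<s} (\<lambda>t. {..<k t})"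
  unfolding union_verts_def by auto

lemma finite_union_verts: "finite (union_verts s k)"
  unfolding union_verts_eq by auto

lemma finite_indep_sets: "finite (indep_sets a s k n)"
proof -
  have "indep_sets a s k n \<subseteq> Pow (union_verts s k)" unfolding indep_sets_def union_indep_def by auto
  moreover have "finite (Pow (union_verts s k))" using finite_union_verts by simp
  ultimately show ?thesis by (rule finite_subset)
qed

lemma num_indep_eq_card: "num_indep a n s k = card (indep_sets a s k n)"
  unfolding num_indep_def indep_sets_def by simp

definition add_component :: "nat \<Rightarrow> (nat \<times> nat) set \<Rightarrow> int set \<Rightarrow> (nat \<times> nat) set" where
  "add_component s A B = A \<union> (\<lambda>i. (s, nat i)) ` B"

lemma fst_lt_of_indep_sets: "A \<in> indep_sets a s k j \<Longrightarrow> v \<in> A \<Longrightarrow> fst v < s"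
  unfolding indep_sets_def union_indep_def union_verts_def by auto

lemma add_component_mem_indep_sets:
  assumes pos: "\<forall>r\<in>a. 0 < r" and diff_le_M: "\<forall>r\<in>a. int r \<le> M" and k: "M < int (k s)"
    and j: "j \<le> n" and AI: "A \<in> indep_sets a s k j" and BC: "B \<in> cycle_sets a (k s) (n - j)"
  shows "add_component s A B \<in> indep_sets a (Suc s) k n"
proof -
  define S where "S = add_component s A B"
  have Ai: "union_indep a s k A" "card A = j" using AI unfolding indep_sets_def by auto
  have Bs: "B \<subseteq> {0..<int (k s)}" "diff_free a (periodic (k s) B)" "card B = n - j"
    using BC unfolding cycle_sets_def by auto
  define B' where "B' = nat ` B"
  have BB': "int ` B' = B" unfolding B'_def using Bs(1) by (force simp: image_image)
  have B'sub: "B' \<subseteq> {0..<k s}" unfolding B'_def using Bs(1) by force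
  have nadjB: "\<forall>i\<in>B'. \<forall>j\<in>B'. \<not> circ_adj a (k s) i j"
    using circ_indep_iff_diff_free[OF pos diff_le_M k B'sub] BB' Bs(2) by simp
  have img: "S = A \<union> (\<lambda>i. (s, i)) ` B'" unfolding S_def add_component_def B'_def by (auto simp: image_image)
  have Asub: "A \<subseteq> union_verts s k" using Ai unfolding union_indep_def by auto
  have sub: "S \<subseteq> union_verts (Suc s) k" unfolding img using Asub B'sub unfolding union_verts_def by auto
  have nadj: "\<forall>v\<in>S. \<forall>w\<in>S. \<not> union_adj a k v w"
  proof (intro ballI notI)
    fix v w assume v: "v \<in> S" and w: "w \<in> S" and adj: "union_adj a k v w"
    have fe: "fst v = fst w" using adj unfolding union_adj_def by auto
    have "fst u = s" if "u \<in> S" "u \<notin> A" for u using that unfolding img by auto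
    hence "v \<in> A \<and> w \<in> A \<or> v \<notin> A \<and> w \<notin> A"
      using v w fe fst_lt_of_indep_sets[OF AI] by fastforce
    thus False
    proof
      assume "v \<in> A \<and> w \<in> A" thus False using Ai adj unfolding union_indep_def by blast
    next
      assume "v \<notin> A \<and> w \<notin> A"
      then obtain i j where "v = (s, i)" "w = (s, j)" "i \<in> B'" "j \<in> B'" using v w unfolding img by auto
      thus False using adj nadjB unfolding union_adj_def by auto
    qed
  qed
  have finA: "finite A" using Asub finite_union_verts finite_subset by blast
  have disj: "A \<inter> (\<lambda>i. (s, i)) ` B' = {}" using fst_lt_of_indep_sets[OF AI] by fastforce
  have "card ((\<lambda>i. (s, i)) ` B') = card B'" by (rule card_image) (simp add: inj_on_def)
  also have "card B' = card B" using BB' card_image[of int B'] by (metis inj_on_of_nat)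
  finally have "card S = n" unfolding img using card_Un_disjoint[OF finA _ disj] B'sub Ai(2) Bs(3) j
    finite_subset[OF B'sub] by simp
  thus ?thesis unfolding S_def[symmetric] indep_sets_def union_indep_def using sub nadj by auto
qed

lemma indep_sets_Suc_imp_add_component:
  assumes pos: "\<forall>r\<in>a. 0 < r" and diff_le_M: "\<forall>r\<in>a. int r \<le> M" and k: "M < int (k s)"
    and SI: "S \<in> indep_sets a (Suc s) k n"
  shows "\<exists>j\<le>n. \<exists>A\<in>indep_sets a s k j. \<exists>B\<in>cycle_sets a (k s) (n - j). S = add_component s A B"
proof -
  have Sv: "S \<subseteq> union_verts (Suc s) k" and nadj: "\<forall>v\<in>S. \<forall>w\<in>S. \<not> union_adj a k v w"
    and cS: "card S = n"
    using SI unfolding indep_sets_def union_indep_def by auto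
  have finS: "finite S" using Sv finite_union_verts finite_subset by blast
  define A where "A = S \<inter> {v. fst v < s}"
  define S2 where "S2 = S \<inter> {v. fst v = s}"
  define B' where "B' = snd ` S2"
  define B where "B = int ` B'"
  have SA: "S = A \<union> S2" using Sv unfolding A_def S2_def union_verts_def by auto
  have S2e: "S2 = (\<lambda>i. (s, i)) ` B'" unfolding B'_def S2_def by force
  have hS: "add_component s A B = S" unfolding add_component_def B_def using SA S2e by (auto simp: image_image)
  have disj: "A \<inter> S2 = {}" unfolding A_def S2_def by auto
  have cardS: "card S = card A + card S2" using SA card_Un_disjoint[OF _ _ disj] finS
    unfolding A_def S2_def by auto
  have injsnd: "inj_on snd S2" unfolding S2_def by (rule inj_onI) (auto simp: prod_eq_iff)
  have cB: "card B = card S2" unfolding B_def B'_def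
    using card_image[OF injsnd] card_image[of int "snd ` S2"] by (simp add: inj_on_def)
  have B'sub: "B' \<subseteq> {0..<k s}" using Sv unfolding B'_def S2_def union_verts_def by auto
  have "\<forall>i\<in>B'. \<forall>j\<in>B'. \<not> circ_adj a (k s) i j"
  proof (intro ballI notI)
    fix i j assume "i \<in> B'" "j \<in> B'" "circ_adj a (k s) i j"
    hence "(s, i) \<in> S" "(s, j) \<in> S" "union_adj a k (s, i) (s, j)"
      unfolding B'_def S2_def union_adj_def by auto
    thus False using nadj by blast
  qed
  hence "diff_free a (periodic (k s) B)"
    unfolding B_def using circ_indep_iff_diff_free[OF pos diff_le_M k B'sub] by simp
  hence BC: "B \<in> cycle_sets a (k s) (n - card A)"
    unfolding cycle_sets_def using cB cardS cS B'sub unfolding B_def by auto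
  have AI: "A \<in> indep_sets a s k (card A)" unfolding indep_sets_def union_indep_def
    using Sv nadj unfolding A_def union_verts_def by auto
  have "card A \<le> n" using cardS cS by simp
  thus ?thesis using AI BC hS by blast
qed

lemma add_component_split:
  assumes AI: "A \<in> indep_sets a s k j" and BC: "B \<in> cycle_sets a (k s) m"
  shows "add_component s A B \<inter> {v. fst v < s} = A" "int ` snd ` (add_component s A B \<inter> {v. fst v = s}) = B"
proof -
  show "add_component s A B \<inter> {v. fst v < s} = A"
    unfolding add_component_def using fst_lt_of_indep_sets[OF AI] by auto
  have "add_component s A B \<inter> {v. fst v = s} = (\<lambda>i. (s, nat i)) ` B"
    unfolding add_component_def using fst_lt_of_indep_sets[OF AI] by auto
  hence "int ` snd ` (add_component s A B \<inter> {v. fst v = s}) = (\<lambda>i. int (nat i)) ` B"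
    by (simp add: image_image)
  also have "\<dots> = B" using BC unfolding cycle_sets_def by (force simp: image_iff)
  finally show "int ` snd ` (add_component s A B \<inter> {v. fst v = s}) = B" .
qed

lemma num_indep_Suc:
  assumes pos: "\<forall>r\<in>a. 0 < r" and diff_le_M: "\<forall>r\<in>a. int r \<le> M" and k: "M < int (k s)"
  shows "num_indep a n (Suc s) k = (\<Sum>j\<le>n. num_indep a j s k * cycle_count a (k s) (n - j))"
proof -
  define D where "D = (\<Union>j\<in>{..n}. indep_sets a s k j \<times> cycle_sets a (k s) (n - j))"
  have eq: "indep_sets a (Suc s) k n = case_prod (add_component s) ` D"
    using indep_sets_Suc_imp_add_component[where k = k and s = s, OF pos diff_le_M k]
      add_component_mem_indep_sets[where k = k and s = s, OF pos diff_le_M k] unfolding D_def by fastforce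
  have inj: "inj_on (case_prod (add_component s)) D"
  proof (rule inj_onI, clarify)
    fix A B A' B' assume "(A, B) \<in> D" "(A', B') \<in> D" and e: "add_component s A B = add_component s A' B'"
    thus "A = A' \<and> B = B'" unfolding D_def using add_component_split by (metis (no_types, lifting) SigmaE UN_E prod.inject)
  qed
  have finD: "finite (indep_sets a s k j \<times> cycle_sets a (k s) (n - j))" for j
    using finite_indep_sets finite_cycle_sets by auto
  have disjD: "(indep_sets a s k i \<times> cycle_sets a (k s) (n - i)) \<inter> (indep_sets a s k j \<times> cycle_sets a (k s) (n - j)) = {}"
    if "i \<noteq> j" for i j using that unfolding indep_sets_def by auto
  have "num_indep a n (Suc s) k = card D" unfolding num_indep_eq_card eq using card_image[OF inj] by simp
  also have "\<dots> = (\<Sum>j\<le>n. card (indep_sets a s k j \<times> cycle_sets a (k s) (n - j)))"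
    unfolding D_def by (rule card_UN_disjoint) (auto simp: finD disjD)
  also have "\<dots> = (\<Sum>j\<le>n. num_indep a j s k * cycle_count a (k s) (n - j))"
    by (simp add: num_indep_eq_card cycle_count_def card_cartesian_product)
  finally show ?thesis .
qed

lemma num_indep_0: "num_indep a n 0 k = (if n = 0 then 1 else 0)"
proof -
  have "{S. union_indep a 0 k S \<and> card S = n} = (if n = 0 then {{}} else {})"
    unfolding union_indep_def union_verts_def by auto
  thus ?thesis unfolding num_indep_def by simp
qed

section \<open>Power series modulo a power of x\<close>

definition fps_eq_upto :: "nat \<Rightarrow> 'a::comm_ring_1 fps \<Rightarrow> 'a fps \<Rightarrow> bool" where
  "fps_eq_upto m f g \<longleftrightarrow> (\<forall>i\<le>m. f $ i = g $ i)"

lemma fps_eq_upto_refl [simp]: "fps_eq_upto m f f" unfolding fps_eq_upto_def by simp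
lemma fps_eq_upto_sym: "fps_eq_upto m f g \<Longrightarrow> fps_eq_upto m g f" unfolding fps_eq_upto_def by simp
lemma fps_eq_upto_trans: "fps_eq_upto m f g \<Longrightarrow> fps_eq_upto m g h \<Longrightarrow> fps_eq_upto m f h" unfolding fps_eq_upto_def by simp
lemma fps_eq_uptoD: "fps_eq_upto m f g \<Longrightarrow> i \<le> m \<Longrightarrow> f $ i = g $ i" unfolding fps_eq_upto_def by simp
lemma fps_eq_upto_mono: "fps_eq_upto m f g \<Longrightarrow> m' \<le> m \<Longrightarrow> fps_eq_upto m' f g" unfolding fps_eq_upto_def by simp

lemma fps_eq_upto_mult_right: "fps_eq_upto m f g \<Longrightarrow> fps_eq_upto m (f * h) (g * h)"
  unfolding fps_eq_upto_def fps_mult_nth by (auto intro!: sum.cong)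

lemma fps_eq_upto_mult_left: "fps_eq_upto m f g \<Longrightarrow> fps_eq_upto m (h * f) (h * g)"
  using fps_eq_upto_mult_right[of m f g h] by (simp add: mult.commute)

lemma fps_eq_upto_mult: "fps_eq_upto m f g \<Longrightarrow> fps_eq_upto m f' g' \<Longrightarrow> fps_eq_upto m (f * f') (g * g')"
  using fps_eq_upto_mult_right fps_eq_upto_mult_left fps_eq_upto_trans by blast

lemma fps_eq_upto_add: "fps_eq_upto m f g \<Longrightarrow> fps_eq_upto m f' g' \<Longrightarrow> fps_eq_upto m (f + f') (g + g')"
  unfolding fps_eq_upto_def by simp

lemma fps_eq_upto_sum: "(\<And>x. x \<in> A \<Longrightarrow> fps_eq_upto m (f x) (g x)) \<Longrightarrow> fps_eq_upto m (sum f A) (sum g A)"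
  unfolding fps_eq_upto_def by (auto simp: fps_sum_nth intro!: sum.cong)

definition int_coeffs :: "rat fps \<Rightarrow> bool" where
  "int_coeffs f \<longleftrightarrow> (\<forall>i. f $ i \<in> \<int>)"

lemma int_coeffs_mult: "int_coeffs f \<Longrightarrow> int_coeffs g \<Longrightarrow> int_coeffs (f * g)"
  unfolding int_coeffs_def fps_mult_nth by (auto intro!: Ints_sum Ints_mult)

lemma int_coeffs_one: "int_coeffs 1"
  unfolding int_coeffs_def by (simp add: fps_one_nth)

lemma int_coeffs_power: "int_coeffs f \<Longrightarrow> int_coeffs (f ^ k)"
  by (induction k) (auto intro: int_coeffs_mult int_coeffs_one)

lemma int_coeffs_diff: "int_coeffs f \<Longrightarrow> int_coeffs g \<Longrightarrow> int_coeffs (f - g)"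
  unfolding int_coeffs_def by auto

lemma int_coeffs_inverse:
  assumes f0: "f $ 0 = 1" and fi: "int_coeffs f"
  shows "int_coeffs (inverse f)"
  unfolding int_coeffs_def
proof
  fix i show "inverse f $ i \<in> \<int>"
  proof (induction i rule: less_induct)
    case (less i)
    show ?case
    proof (cases "i = 0")
      case True thus ?thesis using f0 by simp
    next
      case False
      have "(f * inverse f) $ i = 0" using inverse_mult_eq_1[of f] f0 False by (simp add: mult.commute)
      hence "(\<Sum>j = 0..i. f $ j * inverse f $ (i - j)) = 0" by (simp add: fps_mult_nth)
      moreover have "{0..i} = insert 0 {1..i}" by auto
      ultimately have "inverse f $ i + (\<Sum>j = 1..i. f $ j * inverse f $ (i - j)) = 0" using f0 by simp
      hence "inverse f $ i = - (\<Sum>j = 1..i. f $ j * inverse f $ (i - j))" by (simp add: eq_neg_iff_add_eq_0)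
      moreover have "(\<Sum>j = 1..i. f $ j * inverse f $ (i - j)) \<in> \<int>"
        using fi less False unfolding int_coeffs_def by (intro Ints_sum Ints_mult) auto
      ultimately show ?thesis by simp
    qed
  qed
qed

lemma fps_inverse_nth_0_one: "f $ 0 = (1::'a::field) \<Longrightarrow> inverse f $ 0 = 1"
  by (simp add: fps_inverse_def)

lemma int_eq_0_if_dvd_unbounded:
  assumes "\<And>k. K \<le> k \<Longrightarrow> int k dvd x"
  shows "x = 0"
proof -
  have "int (K + nat \<bar>x\<bar> + 1) dvd x" by (rule assms) simp
  moreover have "\<bar>x\<bar> < \<bar>int (K + nat \<bar>x\<bar> + 1)\<bar>" by simp
  ultimately show ?thesis using dvd_imp_le_int[of x] by force
qed

lemma dvd_fact_mult_binomial:
  assumes i: "1 \<le> i" "i \<le> n"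
  shows "k dvd fact n * (k choose i)"
proof -
  have "i dvd fact n" using i by (intro dvd_fact) auto
  then obtain q where q: "fact n = i * q" by (auto elim: dvdE)
  have "i * (k choose i) = k * (k - 1 choose (i - 1))" using i by (intro times_binomial_minus1_eq) auto
  hence "fact n * (k choose i) = k * (q * (k - 1 choose (i - 1)))" unfolding q by (simp add: ac_simps)
  thus ?thesis by simp
qed

definition binomial_poly :: "nat \<Rightarrow> rat poly" where
  "binomial_poly i = smult (inverse (fact i)) (\<Prod>j<i. [:- of_nat j, 1:])"

lemma poly_binomial_poly: "poly (binomial_poly i) (of_nat K) = of_nat (K choose i)"
proof -
  have "poly (binomial_poly i) (of_nat K) = inverse (fact i) * (\<Prod>j<i. of_nat K - of_nat j)"
    unfolding binomial_poly_def by (simp add: poly_prod)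
  also have "(\<Prod>j<i. of_nat K - of_nat j) = (\<Prod>j = 0..<i. (of_nat K :: rat) - of_nat j)"
    by (simp add: atLeast0LessThan)
  also have "\<dots> = fact i * (of_nat K gchoose i)" by (rule gbinomial_mult_fact[symmetric])
  finally show ?thesis by (simp add: binomial_gbinomial)
qed

section \<open>Generating functions modulo x^(n+1)\<close>

locale bounded_diffs_upto = bounded_diffs +
  fixes n :: nat
begin

definition line_fps :: "nat \<Rightarrow> rat fps" where
  "line_fps L = Abs_fps (\<lambda>m. of_nat (line_count a L m))"

abbreviation clusters_n :: "int set set" where "clusters_n \<equiv> clusters a M (2 * int n * M)"

definition cluster_len :: "int set \<Rightarrow> nat" where "cluster_len C = nat (Max C + M)"

definition len_bound :: nat where "len_bound = nat (2 * int n * M + M) + 1"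

lemma line_fps_nth: "line_fps L $ m = of_nat (line_count a L m)" unfolding line_fps_def by simp

lemma line_fps_nth_0: "line_fps L $ 0 = 1" by (simp add: line_fps_nth line_count_0)

lemma int_coeffs_line_fps: "int_coeffs (line_fps L)" unfolding int_coeffs_def line_fps_nth by simp

lemma clusters_n_facts:
  assumes "C \<in> clusters_n"
  shows "1 \<le> card C" "0 \<le> Max C" "Max C \<le> 2 * int n * M" "cluster_len C < len_bound" "cluster M C"
proof -
  have cl: "cluster M C" and sub: "C \<subseteq> {0..2 * int n * M}" using assms unfolding clusters_def by auto
  show "cluster M C" by (rule cl)
  have fin: "finite C" "0 \<in> C" using cl unfolding cluster_def by auto
  thus "1 \<le> card C" by (metis One_nat_def Suc_leI card_gt_0_iff empty_iff)
  show "0 \<le> Max C" using cluster_Max_ge[OF cl fin(2)] .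
  show "Max C \<le> 2 * int n * M" using cluster_Max_in[OF cl] sub by auto
  thus "cluster_len C < len_bound" unfolding cluster_len_def len_bound_def using M_ge_1 \<open>0 \<le> Max C\<close> by auto
qed

lemma line_fps_Suc:
  assumes L: "2 * int n * M \<le> int L"
  shows "fps_eq_upto n (line_fps (Suc L)) (line_fps L + (\<Sum>C\<in>clusters_n. fps_X ^ card C * line_fps (L - cluster_len C)))"
  unfolding fps_eq_upto_def
proof (intro allI impI)
  fix m assume mn: "m \<le> n"
  have "line_fps (Suc L) $ m = of_nat (line_count a L m) + (\<Sum>C\<in>clusters_n. of_nat (if card C \<le> m \<and> Max C \<le> int L
        then line_count a (nat (int L - Max C - M)) (m - card C) else 0))"
    unfolding line_fps_nth using line_count_Suc[OF mn, of L] by simp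
  also have "\<dots> = (line_fps L + (\<Sum>C\<in>clusters_n. fps_X ^ card C * line_fps (L - cluster_len C))) $ m"
  proof -
    have "of_nat (if card C \<le> m \<and> Max C \<le> int L then line_count a (nat (int L - Max C - M)) (m - card C) else 0)
          = (fps_X ^ card C * line_fps (L - cluster_len C)) $ m" if C: "C \<in> clusters_n" for C
    proof -
      have "Max C \<le> int L" using clusters_n_facts(3)[OF C] L by simp
      moreover have "nat (int L - Max C - M) = L - cluster_len C" unfolding cluster_len_def using clusters_n_facts(2)[OF C] M_ge_1 by auto
      ultimately show ?thesis by (simp add: fps_X_power_mult_nth line_fps_nth not_less)
    qed
    thus ?thesis by (simp add: fps_sum_nth line_fps_nth)
  qed
  finally show "line_fps (Suc L) $ m = (line_fps L + (\<Sum>C\<in>clusters_n. fps_X ^ card C * line_fps (L - cluster_len C))) $ m" .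
qed

lemma line_fps_Suc_mult_nth:
  assumes mn: "m \<le> n" and L: "2 * int n * M \<le> int L"
  shows "(line_fps (Suc L) * Q) $ m = (line_fps L * Q) $ m +
     (\<Sum>C\<in>clusters_n. if card C \<le> m then (line_fps (L - cluster_len C) * Q) $ (m - card C) else 0)"
proof -
  have "(line_fps (Suc L) * Q) $ m = ((line_fps L + (\<Sum>C\<in>clusters_n. fps_X ^ card C * line_fps (L - cluster_len C))) * Q) $ m"
    using fps_eq_upto_mult_right[OF fps_eq_upto_mono[OF line_fps_Suc[OF L] mn]] unfolding fps_eq_upto_def by simp
  also have "\<dots> = (line_fps L * Q) $ m + (\<Sum>C\<in>clusters_n. (fps_X ^ card C * (line_fps (L - cluster_len C) * Q)) $ m)"
    by (simp add: distrib_right sum_distrib_right fps_sum_nth mult.assoc)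
  also have "\<dots> = (line_fps L * Q) $ m +
     (\<Sum>C\<in>clusters_n. if card C \<le> m then (line_fps (L - cluster_len C) * Q) $ (m - card C) else 0)"
    by (simp add: fps_X_power_mult_nth not_less) (rule sum.cong, auto)
  finally show ?thesis .
qed

lemma line_fps_mult_nth_sum_eq_if_step:
  assumes step: "\<And>L L'. m * len_bound \<le> L \<Longrightarrow> m * len_bound \<le> L' \<Longrightarrow>
      (line_fps (Suc L) * line_fps L') $ m = (line_fps L * line_fps (Suc L')) $ m"
    and L: "m * len_bound \<le> L1" "m * len_bound \<le> L2" "m * len_bound \<le> L1'" "m * len_bound \<le> L2'"
    and s: "L1 + L2 = L1' + L2'"
  shows "(line_fps L1 * line_fps L2) $ m = (line_fps L1' * line_fps L2') $ m"
proof -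
  have shift: "(line_fps L1 * line_fps (L2 + d)) $ m = (line_fps (L1 + d) * line_fps L2) $ m"
    if "m * len_bound \<le> L1" "m * len_bound \<le> L2" for d L1 L2
    using that
  proof (induction d arbitrary: L1)
    case (Suc d)
    have "(line_fps L1 * line_fps (Suc (L2 + d))) $ m = (line_fps (Suc L1) * line_fps (L2 + d)) $ m"
      using step[of L1 "L2 + d"] Suc.prems by simp
    also have "\<dots> = (line_fps (Suc L1 + d) * line_fps L2) $ m" using Suc.IH[of "Suc L1"] Suc.prems by simp
    finally show ?case by simp
  qed simp
  show ?thesis
  proof (cases "L1 \<le> L1'")
    case True
    hence "L2 = L2' + (L1' - L1)" "L1' = L1 + (L1' - L1)" using s by auto
    thus ?thesis using shift[OF L(1,4)] by metis
  next
    case False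
    hence "L2' = L2 + (L1 - L1')" "L1 = L1' + (L1 - L1')" using s by auto
    thus ?thesis using shift[OF L(3,2)] by metis
  qed
qed

lemma line_fps_mult_nth_step:
  assumes mn: "m \<le> n"
    and IH: "\<And>m' L1 L2 L1' L2'. m' < m \<Longrightarrow> m' * len_bound \<le> L1 \<Longrightarrow> m' * len_bound \<le> L2 \<Longrightarrow>
      m' * len_bound \<le> L1' \<Longrightarrow> m' * len_bound \<le> L2' \<Longrightarrow> L1 + L2 = L1' + L2' \<Longrightarrow>
      (line_fps L1 * line_fps L2) $ m' = (line_fps L1' * line_fps L2') $ m'"
    and L: "m * len_bound \<le> L" and L': "m * len_bound \<le> L'"
  shows "(line_fps (Suc L) * line_fps L') $ m = (line_fps L * line_fps (Suc L')) $ m"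
proof (cases "m = 0")
  case True thus ?thesis by (simp add: line_fps_nth_0)
next
  case False
  have "2 * int n * M < int len_bound" unfolding len_bound_def using M_ge_1 by auto
  moreover have "len_bound \<le> m * len_bound" using False by simp
  ultimately have L2: "2 * int n * M \<le> int L" "2 * int n * M \<le> int L'" using L L' by linarith+
  have "(line_fps (Suc L') * line_fps L) $ m = (line_fps L' * line_fps L) $ m +
     (\<Sum>C\<in>clusters_n. if card C \<le> m then (line_fps (L' - cluster_len C) * line_fps L) $ (m - card C) else 0)"
    using line_fps_Suc_mult_nth[OF mn L2(2)] .
  hence B: "(line_fps L * line_fps (Suc L')) $ m = (line_fps L * line_fps L') $ m +
     (\<Sum>C\<in>clusters_n. if card C \<le> m then (line_fps L * line_fps (L' - cluster_len C)) $ (m - card C) else 0)"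
    by (simp only: mult.commute[of "line_fps L"])
  have "(line_fps (L - cluster_len C) * line_fps L') $ (m - card C) =
      (line_fps L * line_fps (L' - cluster_len C)) $ (m - card C)"
    if C: "C \<in> clusters_n" and cm: "card C \<le> m" for C
  proof -
    have c1: "1 \<le> card C" and len: "cluster_len C < len_bound" using clusters_n_facts[OF C] by auto
    have "(m - card C + 1) * len_bound \<le> m * len_bound" using c1 cm by (intro mult_le_mono1) simp
    hence mm: "(m - card C) * len_bound + len_bound \<le> m * len_bound" by simp
    show ?thesis
      by (rule IH) (use c1 False mm L L' len in linarith)+
  qed
  hence "(\<Sum>C\<in>clusters_n. if card C \<le> m then (line_fps (L - cluster_len C) * line_fps L') $ (m - card C) else 0) =
      (\<Sum>C\<in>clusters_n. if card C \<le> m then (line_fps L * line_fps (L' - cluster_len C)) $ (m - card C) else 0)"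
    by (intro sum.cong) auto
  thus ?thesis using line_fps_Suc_mult_nth[OF mn L2(1)] B by simp
qed

text \<open>Moving one position from one factor to the other and expanding both sides with the cluster
  recursion produces the same terms, by induction on m.\<close>
lemma line_fps_mult_nth_sum_eq:
  assumes "m \<le> n" "m * len_bound \<le> L1" "m * len_bound \<le> L2" "m * len_bound \<le> L1'" "m * len_bound \<le> L2'"
    and "L1 + L2 = L1' + L2'"
  shows "(line_fps L1 * line_fps L2) $ m = (line_fps L1' * line_fps L2') $ m"
  using assms
proof (induction m arbitrary: L1 L2 L1' L2' rule: less_induct)
  case (less m)
  have step: "(line_fps (Suc L) * line_fps L') $ m = (line_fps L * line_fps (Suc L')) $ m"
    if "m * len_bound \<le> L" "m * len_bound \<le> L'" for L L'
    using line_fps_mult_nth_step[OF less.prems(1) less.IH that] less.prems(1) by fastforce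
  show ?case by (rule line_fps_mult_nth_sum_eq_if_step[OF step less.prems(2-6)])
qed

definition stable_len :: nat where "stable_len = n * len_bound"
definition ratio :: "rat fps" where "ratio = line_fps (Suc stable_len) * inverse (line_fps stable_len)"

lemma ratio_nth_0: "ratio $ 0 = 1"
  unfolding ratio_def by (simp add: line_fps_nth_0 fps_inverse_nth_0_one)

lemma int_coeffs_ratio: "int_coeffs ratio"
  unfolding ratio_def by (intro int_coeffs_mult int_coeffs_inverse int_coeffs_line_fps line_fps_nth_0)

lemma line_fps_stable_inverse: "line_fps stable_len * inverse (line_fps stable_len) = 1"
  using inverse_mult_eq_1[of "line_fps stable_len"] line_fps_nth_0 by (simp add: mult.commute)

lemma line_fps_Suc_eq: assumes L: "stable_len \<le> L" shows "fps_eq_upto n (line_fps (Suc L)) (line_fps L * ratio)"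
proof -
  have "fps_eq_upto n (line_fps (Suc L) * line_fps stable_len) (line_fps L * line_fps (Suc stable_len))"
    unfolding fps_eq_upto_def
  proof (intro allI impI)
    fix m assume mn: "m \<le> n"
    have "m * len_bound \<le> stable_len" unfolding stable_len_def using mn by (intro mult_le_mono1)
    thus "(line_fps (Suc L) * line_fps stable_len) $ m = (line_fps L * line_fps (Suc stable_len)) $ m"
      using L by (intro line_fps_mult_nth_sum_eq[OF mn]) auto
  qed
  from fps_eq_upto_mult_right[OF this, of "inverse (line_fps stable_len)"]
  show ?thesis by (simp add: mult.assoc line_fps_stable_inverse ratio_def)
qed

lemma line_fps_add_eq: assumes L: "stable_len \<le> L" shows "fps_eq_upto n (line_fps (L + j)) (line_fps L * ratio ^ j)"
proof (induction j)
  case 0 thus ?case by simp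
next
  case (Suc j)
  have "fps_eq_upto n (line_fps (L + Suc j)) (line_fps (L + j) * ratio)" using line_fps_Suc_eq[of "L + j"] L by simp
  moreover have "fps_eq_upto n (line_fps (L + j) * ratio) (line_fps L * ratio ^ j * ratio)" by (rule fps_eq_upto_mult_right[OF Suc.IH])
  ultimately have "fps_eq_upto n (line_fps (L + Suc j)) (line_fps L * ratio ^ j * ratio)" by (rule fps_eq_upto_trans)
  thus ?case by (simp add: ac_simps)
qed

definition cycle_fps :: "nat \<Rightarrow> rat fps" where
  "cycle_fps k = Abs_fps (\<lambda>m. of_nat (cycle_count a k m))"

text \<open>Large enough for cycle_count_eq and for all the path lengths k - cluster_offset C occurring
  there to be at least stable_len.\<close>
definition cycle_threshold :: nat where
  "cycle_threshold = nat (2 * (int n + 3) * M + 2) + stable_len + nat (2 * int n * M + 2 * M + 1)"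

definition cluster_offset :: "int set \<Rightarrow> nat" where "cluster_offset C = nat (Max C + 2 * M + 1)"

definition cluster_weight :: "int set \<Rightarrow> rat fps" where "cluster_weight C = of_nat (nat (Max C + M + 1))"

lemma cycle_fps_nth: "cycle_fps k $ m = of_nat (cycle_count a k m)" unfolding cycle_fps_def by simp

lemma cycle_fps_eq:
  assumes k: "cycle_threshold \<le> k"
  shows "fps_eq_upto n (cycle_fps k) (line_fps (k - nat M - 1) + (\<Sum>C\<in>clusters_n. cluster_weight C * (fps_X ^ card C * line_fps (k - cluster_offset C))))"
  unfolding fps_eq_upto_def
proof (intro allI impI)
  fix m assume mn: "m \<le> n"
  have k': "2 * (int n + 3) * M + 2 \<le> int k" using k unfolding cycle_threshold_def by auto
  have "cycle_fps k $ m = of_nat (line_count a (nat (int k - M - 1)) m) +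
    (\<Sum>C\<in>clusters_n. of_nat (nat (Max C + M + 1) *
       (if card C \<le> m then line_count a (nat (int k - Max C - 2 * M - 1)) (m - card C) else 0)))"
    unfolding cycle_fps_nth cycle_count_eq[OF mn k'] by simp
  also have "\<dots> = (line_fps (k - nat M - 1) + (\<Sum>C\<in>clusters_n. cluster_weight C * (fps_X ^ card C * line_fps (k - cluster_offset C)))) $ m"
  proof -
    have e1: "nat (int k - M - 1) = k - nat M - 1" using M_ge_1 by auto
    have e2: "of_nat (nat (Max C + M + 1) *
       (if card C \<le> m then line_count a (nat (int k - Max C - 2 * M - 1)) (m - card C) else 0)) =
       (cluster_weight C * (fps_X ^ card C * line_fps (k - cluster_offset C))) $ m" if C: "C \<in> clusters_n" for C
    proof -
      have "nat (int k - Max C - 2 * M - 1) = k - cluster_offset C" unfolding cluster_offset_def using clusters_n_facts(2)[OF C] M_ge_1 by auto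
      thus ?thesis unfolding cluster_weight_def by (simp add: fps_mult_of_nat_nth fps_X_power_mult_nth line_fps_nth not_less)
    qed
    show ?thesis using e1 e2 by (simp add: fps_sum_nth line_fps_nth)
  qed
  finally show "cycle_fps k $ m = (line_fps (k - nat M - 1) + (\<Sum>C\<in>clusters_n. cluster_weight C * (fps_X ^ card C * line_fps (k - cluster_offset C)))) $ m" .
qed

lemma cycle_fps_Suc:
  assumes k: "cycle_threshold \<le> k"
  shows "fps_eq_upto n (cycle_fps (Suc k)) (cycle_fps k * ratio)"
proof -
  have nM: "0 \<le> int n * M" using M_ge_1 by simp
  have "M + 1 \<le> 2 * int n * M + 2 * M + 1" using nM M_ge_1 by linarith
  hence "nat (M + 1) \<le> nat (2 * int n * M + 2 * M + 1)" by (rule nat_mono)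
  moreover have "nat (M + 1) = nat M + 1" using M_ge_1 by simp
  ultimately have hM: "nat M + 1 \<le> nat (2 * int n * M + 2 * M + 1)" by simp
  hence kM: "nat M + 1 \<le> k" using k unfolding cycle_threshold_def by linarith
  from hM have b1: "stable_len \<le> k - nat M - 1" using k unfolding cycle_threshold_def by linarith
  have b2: "stable_len \<le> k - cluster_offset C" if C: "C \<in> clusters_n" for C
  proof -
    have "cluster_offset C \<le> nat (2 * int n * M + 2 * M + 1)" unfolding cluster_offset_def using clusters_n_facts[OF C] M_ge_1 by auto
    thus ?thesis using k unfolding cycle_threshold_def by auto
  qed
  have e1: "Suc k - nat M - 1 = (k - nat M - 1) + 1" using kM by arith
  have e2: "Suc k - cluster_offset C = (k - cluster_offset C) + 1" if "C \<in> clusters_n" for C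
  proof -
    have "cluster_offset C \<le> k" using b2[OF that] k unfolding cycle_threshold_def cluster_offset_def
      using clusters_n_facts[OF that] M_ge_1 nM by auto
    thus ?thesis by auto
  qed
  have k1: "cycle_threshold \<le> Suc k" using k by simp
  have A: "fps_eq_upto n (cycle_fps (Suc k)) (line_fps (Suc k - nat M - 1) + (\<Sum>C\<in>clusters_n. cluster_weight C * (fps_X ^ card C * line_fps (Suc k - cluster_offset C))))"
    using cycle_fps_eq[OF k1] .
  have B: "fps_eq_upto n (line_fps (Suc k - nat M - 1) + (\<Sum>C\<in>clusters_n. cluster_weight C * (fps_X ^ card C * line_fps (Suc k - cluster_offset C))))
      ((line_fps (k - nat M - 1) + (\<Sum>C\<in>clusters_n. cluster_weight C * (fps_X ^ card C * line_fps (k - cluster_offset C)))) * ratio)"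
  proof -
    have "fps_eq_upto n (line_fps (Suc k - nat M - 1)) (line_fps (k - nat M - 1) * ratio)" using line_fps_add_eq[OF b1, of 1] e1 by simp
    moreover have "fps_eq_upto n (\<Sum>C\<in>clusters_n. cluster_weight C * (fps_X ^ card C * line_fps (Suc k - cluster_offset C)))
         (\<Sum>C\<in>clusters_n. cluster_weight C * (fps_X ^ card C * (line_fps (k - cluster_offset C) * ratio)))"
    proof (rule fps_eq_upto_sum)
      fix C assume C: "C \<in> clusters_n"
      have "fps_eq_upto n (line_fps (Suc k - cluster_offset C)) (line_fps (k - cluster_offset C) * ratio)" using line_fps_add_eq[OF b2[OF C], of 1] e2[OF C] by simp
      thus "fps_eq_upto n (cluster_weight C * (fps_X ^ card C * line_fps (Suc k - cluster_offset C))) (cluster_weight C * (fps_X ^ card C * (line_fps (k - cluster_offset C) * ratio)))"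
        by (intro fps_eq_upto_mult_left)
    qed
    ultimately show ?thesis by (simp add: distrib_right sum_distrib_right mult.assoc fps_eq_upto_add)
  qed
  have C: "fps_eq_upto n ((line_fps (k - nat M - 1) + (\<Sum>C\<in>clusters_n. cluster_weight C * (fps_X ^ card C * line_fps (k - cluster_offset C)))) * ratio) (cycle_fps k * ratio)"
    by (rule fps_eq_upto_mult_right[OF fps_eq_upto_sym[OF cycle_fps_eq[OF k]]])
  show ?thesis using fps_eq_upto_trans[OF fps_eq_upto_trans[OF A B] C] .
qed

definition defect :: "rat fps" where "defect = cycle_fps cycle_threshold * inverse (ratio ^ cycle_threshold)"

lemma ratio_power_nth_0: "(ratio ^ j) $ 0 = 1"
  by (induction j) (simp_all add: ratio_nth_0)

lemma defect_nth_0: "defect $ 0 = 1"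
  unfolding defect_def by (simp add: cycle_fps_nth cycle_count_0 fps_inverse_nth_0_one ratio_power_nth_0)

lemma cycle_fps_eq_defect: assumes k: "cycle_threshold \<le> k" shows "fps_eq_upto n (cycle_fps k) (defect * ratio ^ k)"
  using k
proof (induction k rule: dec_induct)
  case base
  have "inverse (ratio ^ cycle_threshold) * ratio ^ cycle_threshold = 1" using inverse_mult_eq_1[of "ratio ^ cycle_threshold"] ratio_power_nth_0 by simp
  hence "defect * ratio ^ cycle_threshold = cycle_fps cycle_threshold" unfolding defect_def by (simp add: mult.assoc)
  thus ?case by simp
next
  case (step k)
  have "fps_eq_upto n (cycle_fps (Suc k)) (cycle_fps k * ratio)" using cycle_fps_Suc[OF step(1)] .
  moreover have "fps_eq_upto n (cycle_fps k * ratio) (defect * ratio ^ k * ratio)" using fps_eq_upto_mult_right[OF step(3)] .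
  ultimately have "fps_eq_upto n (cycle_fps (Suc k)) (defect * ratio ^ k * ratio)" by (rule fps_eq_upto_trans)
  thus ?case by (simp add: ac_simps)
qed

lemma ratio_minus_1_power_nth:
  assumes "m < i" shows "((ratio - 1) ^ i) $ m = 0"
  using startsby_zero_power_prefix[of "ratio - 1" i] assms ratio_nth_0 by simp

lemma int_coeffs_ratio_minus_1_power: "((ratio - 1) ^ i) $ m \<in> \<int>"
  using int_coeffs_power[OF int_coeffs_diff[OF int_coeffs_ratio int_coeffs_one], of i]
  unfolding int_coeffs_def by auto

lemma ratio_power_nth:
  assumes m1: "1 \<le> m" and mk: "m \<le> k"
  shows "(ratio ^ k) $ m = (\<Sum>i\<in>{1..m}. of_nat (k choose i) * ((ratio - 1) ^ i) $ m)"
proof -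
  have "ratio ^ k = (\<Sum>i\<le>k. of_nat (k choose i) * (ratio - 1) ^ i)"
    using binomial_ring[of "ratio - 1" 1 k] by simp
  hence "(ratio ^ k) $ m = (\<Sum>i\<le>k. of_nat (k choose i) * ((ratio - 1) ^ i) $ m)"
    by (simp add: fps_sum_nth fps_mult_of_nat_nth)
  also have "\<dots> = (\<Sum>i\<in>{1..m}. of_nat (k choose i) * ((ratio - 1) ^ i) $ m)"
    by (rule sum.mono_neutral_right) (use m1 mk in \<open>auto simp: not_le ratio_minus_1_power_nth\<close>)
  finally show ?thesis .
qed

lemma cycle_count_eq_defect_nth:
  assumes m: "1 \<le> m" "m \<le> n" and lower: "\<And>j. 1 \<le> j \<Longrightarrow> j < m \<Longrightarrow> defect $ j = 0"
    and k: "cycle_threshold \<le> k" "m \<le> k"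
  shows "of_nat (cycle_count a k m) = (\<Sum>i\<in>{1..m}. of_nat (k choose i) * ((ratio - 1) ^ i) $ m) + defect $ m"
proof -
  have "of_nat (cycle_count a k m) = (defect * ratio ^ k) $ m"
    using fps_eq_uptoD[OF cycle_fps_eq_defect[OF k(1)] m(2)] by (simp add: cycle_fps_nth)
  also have "\<dots> = (\<Sum>j=0..m. defect $ j * (ratio ^ k) $ (m - j))" by (simp add: fps_mult_nth)
  also have "\<dots> = (\<Sum>j\<in>{0, m}. defect $ j * (ratio ^ k) $ (m - j))"
    by (rule sum.mono_neutral_right) (use m lower in auto)
  also have "\<dots> = (ratio ^ k) $ m + defect $ m" using m by (simp add: defect_nth_0 ratio_power_nth_0)
  finally show ?thesis using ratio_power_nth[OF m(1) k(2)] by simp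
qed

text \<open>Multiplying by n! clears the denominators of the binomial coefficients, and k divides
  m times the number of m-subsets of a k-cycle (count pairs (S, x) with x in S by rotation).\<close>
lemma dvd_defect_nth:
  assumes m: "1 \<le> m" "m \<le> n" and lower: "\<And>j. 1 \<le> j \<Longrightarrow> j < m \<Longrightarrow> defect $ j = 0"
    and k: "cycle_threshold \<le> k" "m \<le> k" and z: "defect $ m = of_int z"
  shows "int k dvd int (fact n) * int m * z"
proof -
  define e where "e i = \<lfloor>((ratio - 1) ^ i) $ m\<rfloor>" for i
  have e: "of_int (e i) = ((ratio - 1) ^ i) $ m" for i
  proof -
    obtain w where "((ratio - 1) ^ i) $ m = of_int w"
      by (rule Ints_cases[OF int_coeffs_ratio_minus_1_power])
    thus ?thesis unfolding e_def by simp
  qed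
  have "(of_int (int (cycle_count a k m)) :: rat) = of_int ((\<Sum>i\<in>{1..m}. int (k choose i) * e i) + z)"
    using cycle_count_eq_defect_nth[OF m lower k] z e by simp
  hence eqi: "int (cycle_count a k m) = (\<Sum>i\<in>{1..m}. int (k choose i) * e i) + z"
    by (simp only: of_int_eq_iff)
  have "0 < k" using k m by simp
  hence "m * cycle_count a k m = k * card {S \<in> cycle_sets a k m. 0 \<in> S}"
    by (rule cycle_count_marking)
  hence "int m * int (cycle_count a k m) = int k * int (card {S \<in> cycle_sets a k m. 0 \<in> S})"
    by (metis of_nat_mult)
  hence "int k dvd int m * int (cycle_count a k m)" by simp
  hence d1: "int k dvd int (fact n) * int m * int (cycle_count a k m)"
    by (simp add: mult.assoc)
  have "int k dvd int (fact n * (k choose i)) * (int m * e i)" if "i \<in> {1..m}" for i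
  proof -
    have "k dvd fact n * (k choose i)" using dvd_fact_mult_binomial[of i n k] that m by simp
    hence "int k dvd int (fact n * (k choose i))" by (simp only: of_nat_dvd_iff)
    thus ?thesis by simp
  qed
  hence "int k dvd (\<Sum>i\<in>{1..m}. int (fact n * (k choose i)) * (int m * e i))"
    by (rule dvd_sum)
  moreover have "(\<Sum>i\<in>{1..m}. int (fact n * (k choose i)) * (int m * e i)) =
      int (fact n) * int m * (\<Sum>i\<in>{1..m}. int (k choose i) * e i)"
    by (simp add: sum_distrib_left ac_simps)
  ultimately have d2: "int k dvd int (fact n) * int m * (\<Sum>i\<in>{1..m}. int (k choose i) * e i)"
    by simp
  have "int (fact n) * int m * int (cycle_count a k m) =
      int (fact n) * int m * (\<Sum>i\<in>{1..m}. int (k choose i) * e i) + int (fact n) * int m * z"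
    unfolding eqi by (simp add: algebra_simps)
  thus ?thesis using d1 dvd_add_right_iff[OF d2] by simp
qed

lemma defect_nth: "1 \<le> m \<Longrightarrow> m \<le> n \<Longrightarrow> defect $ m = 0"
proof (induction m rule: less_induct)
  case (less m)
  have lower: "defect $ j = 0" if "1 \<le> j" "j < m" for j using less that by simp
  have "defect $ m = of_nat (cycle_count a (cycle_threshold + m) m) -
      (\<Sum>i\<in>{1..m}. of_nat ((cycle_threshold + m) choose i) * ((ratio - 1) ^ i) $ m)"
    using cycle_count_eq_defect_nth[OF less.prems lower, of "cycle_threshold + m"] by simp
  hence "defect $ m \<in> \<int>"
    using int_coeffs_ratio_minus_1_power by (auto intro!: Ints_diff Ints_sum Ints_mult)
  then obtain z where z: "defect $ m = of_int z" by (auto elim: Ints_cases)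
  have "int (fact n) * int m * z = 0"
    by (rule int_eq_0_if_dvd_unbounded[of "cycle_threshold + m"])
      (use dvd_defect_nth[OF less.prems lower _ _ z] in auto)
  thus ?case using z less.prems by simp
qed

lemma defect_eq_1: "fps_eq_upto n defect 1"
  unfolding fps_eq_upto_def
proof (intro allI impI)
  fix i assume "i \<le> n"
  thus "defect $ i = 1 $ i" using defect_nth_0 defect_nth[of i] by (cases "i = 0") auto
qed

lemma cycle_fps_eq_power: assumes "cycle_threshold \<le> k" shows "fps_eq_upto n (cycle_fps k) (ratio ^ k)"
proof -
  have "fps_eq_upto n (defect * ratio ^ k) (1 * ratio ^ k)" by (rule fps_eq_upto_mult_right[OF defect_eq_1])
  thus ?thesis using fps_eq_upto_trans[OF cycle_fps_eq_defect[OF assms]] by simp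
qed

definition indep_fps :: "nat \<Rightarrow> (nat \<Rightarrow> nat) \<Rightarrow> rat fps" where
  "indep_fps s k = Abs_fps (\<lambda>j. of_nat (num_indep a j s k))"

lemma indep_fps_0: "indep_fps 0 k = 1"
  unfolding indep_fps_def by (rule fps_ext) (simp add: num_indep_0)

lemma indep_fps_Suc: assumes "M < int (k s)" shows "indep_fps (Suc s) k = indep_fps s k * cycle_fps (k s)"
proof (rule fps_ext)
  fix j
  have "indep_fps (Suc s) k $ j = of_nat (\<Sum>i\<le>j. num_indep a i s k * cycle_count a (k s) (j - i))"
    unfolding indep_fps_def using num_indep_Suc[where k=k and s=s and n=j, OF diff_pos diff_le_M assms] by simp
  also have "\<dots> = (indep_fps s k * cycle_fps (k s)) $ j"
    by (simp add: fps_mult_nth indep_fps_def cycle_fps_nth atLeast0AtMost)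
  finally show "indep_fps (Suc s) k $ j = (indep_fps s k * cycle_fps (k s)) $ j" .
qed

lemma cycle_threshold_gt: "M < int cycle_threshold"
proof -
  have "0 \<le> int n * M" using M_ge_1 by simp
  moreover have "2 * (int n + 3) * M = 2 * (int n * M) + 6 * M" by (simp add: algebra_simps)
  ultimately have "M < 2 * (int n + 3) * M + 2" using M_ge_1 by linarith
  thus ?thesis unfolding cycle_threshold_def by linarith
qed

lemma indep_fps_eq_power: "(\<forall>t<s. cycle_threshold \<le> k t) \<Longrightarrow> fps_eq_upto n (indep_fps s k) (ratio ^ (\<Sum>t<s. k t))"
proof (induction s)
  case 0 thus ?case by (simp add: indep_fps_0)
next
  case (Suc s)
  have ks: "cycle_threshold \<le> k s" using Suc.prems by auto
  hence "M < int (k s)" using cycle_threshold_gt by linarith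
  hence "indep_fps (Suc s) k = indep_fps s k * cycle_fps (k s)" by (rule indep_fps_Suc)
  moreover have "fps_eq_upto n (indep_fps s k * cycle_fps (k s)) (ratio ^ (\<Sum>t<s. k t) * ratio ^ k s)"
    using Suc by (intro fps_eq_upto_mult cycle_fps_eq_power ks) auto
  ultimately show ?case by (simp add: power_add)
qed

definition indep_poly :: "rat poly" where
  "indep_poly = (\<Sum>i\<le>n. smult (((ratio - 1) ^ i) $ n) (binomial_poly i))"

lemma ratio_power_nth_poly: "(ratio ^ K) $ n = poly indep_poly (of_nat K)"
proof -
  have "ratio ^ K = (\<Sum>i\<le>K. of_nat (K choose i) * (ratio - 1) ^ i)"
    using binomial_ring[of "ratio - 1" 1 K] by simp
  hence "(ratio ^ K) $ n = (\<Sum>i\<le>K. of_nat (K choose i) * ((ratio - 1) ^ i) $ n)"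
    by (simp add: fps_sum_nth fps_mult_of_nat_nth)
  also have "\<dots> = (\<Sum>i\<le>K + n. of_nat (K choose i) * ((ratio - 1) ^ i) $ n)"
    by (rule sum.mono_neutral_left) auto
  also have "\<dots> = (\<Sum>i\<le>n. of_nat (K choose i) * ((ratio - 1) ^ i) $ n)"
    by (rule sum.mono_neutral_right) (auto simp: ratio_minus_1_power_nth)
  also have "\<dots> = poly indep_poly (of_nat K)"
    unfolding indep_poly_def by (simp add: poly_sum poly_binomial_poly mult.commute)
  finally show ?thesis .
qed

lemma num_indep_eq_poly:
  assumes "\<forall>t<s. cycle_threshold \<le> k t"
  shows "of_nat (num_indep a n s k) = poly indep_poly (of_nat (\<Sum>t<s. k t))"
  using fps_eq_uptoD[OF indep_fps_eq_power[OF assms], of n] ratio_power_nth_poly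
  by (simp add: indep_fps_def)

end

theorem theorem3p4:
  fixes a :: "nat set" and n :: nat
  assumes "finite a" and "\<forall>r\<in>a. r > 0"
  shows "\<exists>p :: rat poly. \<exists>N :: nat. \<forall>s \<ge> 1. \<forall>k :: nat \<Rightarrow> nat.
           (\<forall>t<s. k t \<ge> N \<and> k t \<ge> 1) \<longrightarrow>
           of_nat (num_indep a n s k) = poly p (of_nat (\<Sum>t<s. k t))"
proof -
  define M where "M = int (Max (insert 1 a))"
  have "\<forall>r\<in>insert 1 a. r \<le> Max (insert 1 a)"
    using assms(1) by simp
  hence "bounded_diffs a M"
    using assms(2) unfolding bounded_diffs_def M_def by auto
  then interpret bounded_diffs_upto a M n
    by (simp add: bounded_diffs_upto_def)
  show ?thesis
    using num_indep_eq_poly by blast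
qed

end
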